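(* Let $f:(\mathbb{C}^3,0)\to(\mathbb{C}^3,0)$ be a degenerate spike $$f(x,y,z)=(x+z^c(\lambda x+P),\; y+z^c(\mu y+Q),\; z+z^{c+1}R),$$ with $c\in\mathbb{N}^*$, $\lambda\in\mathbb{C}^*$, $\mu\in\lambda\mathbb{R}_{<0}$, $P,Q\in\mathfrak{m}^2$, $R\in\mathfrak{m}$. Let $\pi:X\to(\mathbb{C}^3,0)$ be the blow-up of the origin and $\tilde f$ the lift of $f$ to $X$. Then: - at the point of the exceptional divisor corresponding to $[0:0:1]$, $\tilde f$ is a degenerate spike; - at the points corresponding to $[1:0:0]$ and $[0:1:0]$, $\tilde f$ is a simple corner.
   Context: $\mathfrak{m}$ denotes the maximal ideal at $0$. A degenerate spike is a germ of the displayed form in some local coordinates. A simple corner is a germ of the form $$(x+x^ay^bz^c\,x(\lambda+P),\; y+x^ay^bz^c\,y(\mu+Q),\; z+x^ay^bz^c\,R)$$ in some local coordinates, with $a,b\in\mathbb{N}^*$, $c\in\mathbb{N}$, $\lambda\in\mathbb{C}^*$, $\mu\in\mathbb{C}\setminus\lambda\mathbb{Q}_{>0}$, $P,Q,R\in\mathfrak{m}$, and $z\mid R$ if $c>0$. *)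

theory Defs
  imports "HOL-Analysis.Analysis"
begin

type_synonym c3 = "complex \<times> complex \<times> complex"

definition smul3 :: "complex \<Rightarrow> c3 \<Rightarrow> c3" where
  "smul3 c v = (c * fst v, c * fst (snd v), c * snd (snd v))"

definition hol_at :: "(c3 \<Rightarrow> complex) \<Rightarrow> c3 \<Rightarrow> bool" where
  "hol_at g p \<longleftrightarrow> (\<exists>S. open S \<and> p \<in> S \<and>
      (\<forall>q\<in>S. \<exists>L. (g has_derivative L) (at q) \<and> (\<forall>c v. L (smul3 c v) = c * L v)))"

definition hol3_at :: "(c3 \<Rightarrow> c3) \<Rightarrow> c3 \<Rightarrow> bool" where
  "hol3_at F p \<longleftrightarrow> hol_at (\<lambda>v. fst (F v)) p \<and> hol_at (\<lambda>v. fst (snd (F v))) p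
                    \<and> hol_at (\<lambda>v. snd (snd (F v))) p"

definition in_m :: "(c3 \<Rightarrow> complex) \<Rightarrow> bool" where
  "in_m g \<longleftrightarrow> hol_at g 0 \<and> g 0 = 0"

definition in_m2 :: "(c3 \<Rightarrow> complex) \<Rightarrow> bool" where
  "in_m2 g \<longleftrightarrow> (\<exists>(n::nat) a b. (\<forall>i<n. in_m (a i) \<and> in_m (b i)) \<and>
       (\<forall>\<^sub>F v in nhds 0. g v = (\<Sum>i<n. a i v * b i v)))"

definition loc_coords :: "(c3 \<Rightarrow> c3) \<Rightarrow> c3 \<Rightarrow> bool" where
  "loc_coords \<phi> p \<longleftrightarrow> hol3_at \<phi> 0 \<and> \<phi> 0 = p \<and>
     (\<exists>\<psi>. hol3_at \<psi> p \<and> \<psi> p = 0 \<and> (\<forall>\<^sub>F v in nhds 0. \<psi> (\<phi> v) = v)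
          \<and> (\<forall>\<^sub>F w in nhds p. \<phi> (\<psi> w) = w))"

definition germ_in_coords :: "(c3 \<Rightarrow> c3) \<Rightarrow> c3 \<Rightarrow> (c3 \<Rightarrow> c3) \<Rightarrow> bool" where
  "germ_in_coords f p F \<longleftrightarrow> (\<exists>\<phi>. loc_coords \<phi> p \<and> (\<forall>\<^sub>F v in nhds 0. f (\<phi> v) = \<phi> (F v)))"

definition spike_form :: "nat \<Rightarrow> complex \<Rightarrow> complex \<Rightarrow> (c3 \<Rightarrow> complex) \<Rightarrow> (c3 \<Rightarrow> complex)
     \<Rightarrow> (c3 \<Rightarrow> complex) \<Rightarrow> c3 \<Rightarrow> c3" where
  "spike_form c lam mu P Q R = (\<lambda>(x,y,z).
     (x + z^c * (lam * x + P (x,y,z)), y + z^c * (mu * y + Q (x,y,z)), z + z^(c+1) * R (x,y,z)))"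

definition spike_params :: "nat \<Rightarrow> complex \<Rightarrow> complex \<Rightarrow> (c3 \<Rightarrow> complex) \<Rightarrow> (c3 \<Rightarrow> complex)
     \<Rightarrow> (c3 \<Rightarrow> complex) \<Rightarrow> bool" where
  "spike_params c lam mu P Q R \<longleftrightarrow> c \<ge> 1 \<and> lam \<noteq> 0 \<and>
     (\<exists>t::real. t < 0 \<and> mu = complex_of_real t * lam) \<and> in_m2 P \<and> in_m2 Q \<and> in_m R"

definition degenerate_spike :: "(c3 \<Rightarrow> c3) \<Rightarrow> c3 \<Rightarrow> bool" where
  "degenerate_spike f p \<longleftrightarrow> (\<exists>c lam mu P Q R. spike_params c lam mu P Q R \<and>
       germ_in_coords f p (spike_form c lam mu P Q R))"

definition corner_form :: "nat \<Rightarrow> nat \<Rightarrow> nat \<Rightarrow> complex \<Rightarrow> complex \<Rightarrow> (c3 \<Rightarrow> complex)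
     \<Rightarrow> (c3 \<Rightarrow> complex) \<Rightarrow> (c3 \<Rightarrow> complex) \<Rightarrow> c3 \<Rightarrow> c3" where
  "corner_form a b c lam mu P Q R = (\<lambda>(x,y,z). let m = x^a * y^b * z^c in
     (x + m * (x * (lam + P (x,y,z))), y + m * (y * (mu + Q (x,y,z))), z + m * R (x,y,z)))"

definition simple_corner :: "(c3 \<Rightarrow> c3) \<Rightarrow> c3 \<Rightarrow> bool" where
  "simple_corner f p \<longleftrightarrow> (\<exists>a b c lam mu P Q R. a \<ge> 1 \<and> b \<ge> 1 \<and> lam \<noteq> 0 \<and>
       \<not> (\<exists>q::rat. q > 0 \<and> mu = of_rat q * lam) \<and> in_m P \<and> in_m Q \<and> in_m R \<and>
       (c > 0 \<longrightarrow> (\<exists>S. hol_at S 0 \<and> (\<forall>\<^sub>F v in nhds 0. R v = snd (snd v) * S v))) \<and>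
       germ_in_coords f p (corner_form a b c lam mu P Q R))"

text \<open>Standard affine charts of the blow-up of the origin of C^3, centred at the points
  [1:0:0], [0:1:0], [0:0:1] of the exceptional divisor: pi restricted to the chart.\<close>
definition chart1 :: "c3 \<Rightarrow> c3" where "chart1 = (\<lambda>(s,t,r). (s, s*t, s*r))"
definition chart2 :: "c3 \<Rightarrow> c3" where "chart2 = (\<lambda>(s,t,r). ((t * s), t, (t * r)))"
definition chart3 :: "c3 \<Rightarrow> c3" where "chart3 = (\<lambda>(s,t,r). ((s * r), (t * r), r))"

text \<open>G is (the germ at the chart origin of) the lift of f, written in the chart sigma:
  a holomorphic germ with pi o G = f o pi.\<close>
definition is_lift :: "(c3 \<Rightarrow> c3) \<Rightarrow> (c3 \<Rightarrow> c3) \<Rightarrow> (c3 \<Rightarrow> c3) \<Rightarrow> bool" where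
  "is_lift \<sigma> f G \<longleftrightarrow> hol3_at G 0 \<and> (\<forall>\<^sub>F v in nhds 0. \<sigma> (G v) = f (\<sigma> v))"

end

theory Submission
  imports Defs "HOL-Complex_Analysis.Complex_Analysis"
begin

text \<open>In each chart \<open>\<sigma>\<close> of the blow-up the lift is computed explicitly. Pulled back by \<open>\<sigma>\<close>, a germ
  in \<open>m\<close> (resp. \<open>m\<^sup>2\<close>) becomes divisible by the exceptional coordinate
  (resp. its square); this is Hadamard's division lemma, obtained here from the Cauchy integral formula
  on a polydisc. After dividing out, \<open>f \<circ> \<sigma> = \<sigma> \<circ> G\<close> for an explicit holomorphic \<open>G\<close>, which is
  the only lift because \<open>\<sigma>\<close> is injective off the exceptional divisor, a nowhere dense set.
  At \<open>[0:0:1]\<close> a shear \<open>(x, y, z) \<mapsto> (x - \<alpha> z, y - \<beta> z, z)\<close> absorbing the linear parts of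
  \<open>P\<close> and \<open>Q\<close> puts \<open>G\<close> in spike form with the same \<open>c, \<lambda>, \<mu>\<close>. At \<open>[1:0:0]\<close>, after
  exchanging the last two coordinates, \<open>G\<close> is a simple corner with exponents \<open>(c, c, 0)\<close> and
  eigenvalues \<open>(\<lambda>, -\<lambda>)\<close>; the chart at \<open>[0:1:0]\<close> is the same one after exchanging \<open>x\<close> and \<open>y\<close>.\<close>

section \<open>Holomorphic functions of three variables\<close>

definition hol_on :: "c3 set \<Rightarrow> (c3 \<Rightarrow> complex) \<Rightarrow> bool" where
  "hol_on S g \<longleftrightarrow> open S \<and>
     (\<forall>q\<in>S. \<exists>L. (g has_derivative L) (at q) \<and> (\<forall>c v. L (smul3 c v) = c * L v))"

lemma hol_at_iff_hol_on: "hol_at g p \<longleftrightarrow> (\<exists>S. p \<in> S \<and> hol_on S g)"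
  unfolding hol_at_def hol_on_def by blast

lemma hol_on_open: "hol_on S g \<Longrightarrow> open S"
  by (simp add: hol_on_def)

lemma hol_on_subset: "hol_on S g \<Longrightarrow> open T \<Longrightarrow> T \<subseteq> S \<Longrightarrow> hol_on T g"
  unfolding hol_on_def by blast

lemma hol_on_continuous_on: "hol_on S g \<Longrightarrow> continuous_on S g"
  unfolding hol_on_def by (metis continuous_at_imp_continuous_on has_derivative_continuous)

lemma hol_on_linear:
  assumes "open S" "\<And>c v. L (smul3 c v) = c * L v" "linear L"
  shows "hol_on S L"
  using assms linear_imp_has_derivative unfolding hol_on_def by blast

lemma hol_on_const: "open S \<Longrightarrow> hol_on S (\<lambda>v. k)"
  unfolding hol_on_def by (auto intro!: exI[of _ "\<lambda>v. 0"])

lemma hol_on_add: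
  assumes "hol_on S f" "hol_on S g"
  shows "hol_on S (\<lambda>v. f v + g v)"
  unfolding hol_on_def
proof (intro conjI ballI)
  show "open S" using assms hol_on_open by blast
  fix q assume "q \<in> S"
  then obtain L1 L2 where "(f has_derivative L1) (at q)" "\<forall>c v. L1 (smul3 c v) = c * L1 v"
    "(g has_derivative L2) (at q)" "\<forall>c v. L2 (smul3 c v) = c * L2 v"
    using assms unfolding hol_on_def by meson
  then show "\<exists>L. ((\<lambda>v. f v + g v) has_derivative L) (at q) \<and> (\<forall>c v. L (smul3 c v) = c * L v)"
    by (intro exI[of _ "\<lambda>h. L1 h + L2 h"]) (auto intro: has_derivative_add simp: distrib_left)
qed

lemma hol_on_mult:
  assumes "hol_on S f" "hol_on S g"
  shows "hol_on S (\<lambda>v. f v * g v)"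
  unfolding hol_on_def
proof (intro conjI ballI)
  show "open S" using assms hol_on_open by blast
  fix q assume "q \<in> S"
  then obtain L1 L2 where "(f has_derivative L1) (at q)" "\<forall>c v. L1 (smul3 c v) = c * L1 v"
    "(g has_derivative L2) (at q)" "\<forall>c v. L2 (smul3 c v) = c * L2 v"
    using assms unfolding hol_on_def by meson
  then show "\<exists>L. ((\<lambda>v. f v * g v) has_derivative L) (at q) \<and> (\<forall>c v. L (smul3 c v) = c * L v)"
  proof (intro exI conjI)
    show "((\<lambda>v. f v * g v) has_derivative (\<lambda>h. f q * L2 h + L1 h * g q)) (at q)"
      by (rule has_derivative_mult) fact+
  qed (auto simp: algebra_simps)
qed

lemma hol_on_inverse:
  assumes "hol_on S f" "\<And>q. q \<in> S \<Longrightarrow> f q \<noteq> 0"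
  shows "hol_on S (\<lambda>v. inverse (f v))"
  unfolding hol_on_def
proof (intro conjI ballI)
  show "open S" using assms hol_on_open by blast
  fix q assume q: "q \<in> S"
  then obtain L where "(f has_derivative L) (at q)" "\<forall>c v. L (smul3 c v) = c * L v"
    using assms unfolding hol_on_def by meson
  with assms(2)[OF q] show "\<exists>L. ((\<lambda>v. inverse (f v)) has_derivative L) (at q) \<and> (\<forall>c v. L (smul3 c v) = c * L v)"
  proof (intro exI conjI)
    show "((\<lambda>v. inverse (f v)) has_derivative (\<lambda>h. - (inverse (f q) * L h * inverse (f q)))) (at q)"
      by (rule Deriv.has_derivative_inverse) fact+
  qed (auto simp: algebra_simps)
qed

lemma hol_on_compose3:
  assumes g: "hol_on T g" and F: "hol_on S F1" "hol_on S F2" "hol_on S F3"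
    and maps: "\<And>q. q \<in> S \<Longrightarrow> (F1 q, F2 q, F3 q) \<in> T"
  shows "hol_on S (\<lambda>q. g (F1 q, F2 q, F3 q))"
  unfolding hol_on_def
proof (intro conjI ballI)
  show "open S" using F hol_on_open by blast
  fix q assume q: "q \<in> S"
  obtain L1 L2 L3 where 1: "(F1 has_derivative L1) (at q)" "\<forall>c v. L1 (smul3 c v) = c * L1 v"
    and 2: "(F2 has_derivative L2) (at q)" "\<forall>c v. L2 (smul3 c v) = c * L2 v"
    and 3: "(F3 has_derivative L3) (at q)" "\<forall>c v. L3 (smul3 c v) = c * L3 v"
    using F q unfolding hol_on_def by meson
  obtain L where L: "(g has_derivative L) (at (F1 q, F2 q, F3 q))" "\<forall>c v. L (smul3 c v) = c * L v"
    using g maps q unfolding hol_on_def by meson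
  have "((\<lambda>q. (F1 q, F2 q, F3 q)) has_derivative (\<lambda>h. (L1 h, L2 h, L3 h))) (at q)"
    using 1 2 3 by (intro has_derivative_Pair) auto
  from diff_chain_at[OF this L(1)]
  have "((\<lambda>q. g (F1 q, F2 q, F3 q)) has_derivative (\<lambda>h. L (L1 h, L2 h, L3 h))) (at q)"
    by (simp add: o_def)
  moreover have "L (L1 (smul3 c v), L2 (smul3 c v), L3 (smul3 c v)) = c * L (L1 v, L2 v, L3 v)" for c v
  proof -
    have "(L1 (smul3 c v), L2 (smul3 c v), L3 (smul3 c v)) = smul3 c (L1 v, L2 v, L3 v)"
      using 1 2 3 by (simp add: smul3_def)
    then show ?thesis using L(2) by simp
  qed
  ultimately show "\<exists>L. ((\<lambda>q. g (F1 q, F2 q, F3 q)) has_derivative L) (at q) \<and> (\<forall>c v. L (smul3 c v) = c * L v)"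
    by blast
qed

lemma hol_at_const: "hol_at (\<lambda>v. k) p"
  unfolding hol_at_iff_hol_on by (auto intro!: exI[of _ UNIV] hol_on_const)

lemma hol_at_linear: "linear L \<Longrightarrow> (\<And>c v. L (smul3 c v) = c * L v) \<Longrightarrow> hol_at L p"
  unfolding hol_at_iff_hol_on by (auto intro!: exI[of _ UNIV] hol_on_linear)

lemma hol_at_fst: "hol_at (\<lambda>v. fst v) p"
  by (rule hol_at_linear) (simp_all add: smul3_def bounded_linear_fst bounded_linear.linear)

lemma hol_at_fst_snd: "hol_at (\<lambda>v. fst (snd v)) p"
  by (rule hol_at_linear)
    (simp_all add: smul3_def bounded_linear.linear bounded_linear_compose[OF bounded_linear_fst bounded_linear_snd])

lemma hol_at_snd_snd: "hol_at (\<lambda>v. snd (snd v)) p"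
  by (rule hol_at_linear)
    (simp_all add: smul3_def bounded_linear.linear bounded_linear_compose[OF bounded_linear_snd bounded_linear_snd])

lemma hol_at_binop:
  assumes op: "\<And>S. hol_on S f \<Longrightarrow> hol_on S g \<Longrightarrow> hol_on S (\<lambda>v. h (f v) (g v))"
    and "hol_at f p" "hol_at g p"
  shows "hol_at (\<lambda>v. h (f v) (g v)) p"
proof -
  obtain S T where "p \<in> S" "hol_on S f" "p \<in> T" "hol_on T g"
    using assms(2,3) unfolding hol_at_iff_hol_on by blast
  then have "hol_on (S \<inter> T) f" "hol_on (S \<inter> T) g"
    by (meson hol_on_open hol_on_subset inf_le1 inf_le2 open_Int)+
  then have "hol_on (S \<inter> T) (\<lambda>v. h (f v) (g v))" by (rule op)
  moreover have "p \<in> S \<inter> T" using \<open>p \<in> S\<close> \<open>p \<in> T\<close> by blast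
  ultimately show ?thesis unfolding hol_at_iff_hol_on by (intro exI conjI)
qed

lemma hol_at_add: "hol_at f p \<Longrightarrow> hol_at g p \<Longrightarrow> hol_at (\<lambda>v. f v + g v) p"
  by (rule hol_at_binop[where h="(+)"]) (auto intro: hol_on_add)

lemma hol_at_mult: "hol_at f p \<Longrightarrow> hol_at g p \<Longrightarrow> hol_at (\<lambda>v. f v * g v) p"
  by (rule hol_at_binop[where h="(*)"]) (auto intro: hol_on_mult)

lemma hol_at_uminus: "hol_at f p \<Longrightarrow> hol_at (\<lambda>v. - f v) p"
  using hol_at_mult[OF hol_at_const[of "-1"], of f p] by simp

lemma hol_at_diff: "hol_at f p \<Longrightarrow> hol_at g p \<Longrightarrow> hol_at (\<lambda>v. f v - g v) p"
  using hol_at_add[of f p "\<lambda>v. - g v"] hol_at_uminus[of g p] by simp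

lemma hol_at_power: "hol_at f p \<Longrightarrow> hol_at (\<lambda>v. f v ^ n) p"
  by (induction n) (auto intro: hol_at_const hol_at_mult)

lemma hol_at_eventually_isCont:
  assumes "hol_at f p" shows "\<forall>\<^sub>F v in nhds p. isCont f v"
proof -
  obtain S where S: "p \<in> S" "hol_on S f" using assms unfolding hol_at_iff_hol_on by blast
  then have "\<forall>v\<in>S. isCont f v"
    using continuous_on_eq_continuous_at[OF hol_on_open] hol_on_continuous_on by blast
  with S show ?thesis unfolding eventually_nhds using hol_on_open by blast
qed

lemma hol_at_isCont: "hol_at f p \<Longrightarrow> isCont f p"
  by (rule eventually_nhds_x_imp_x[OF hol_at_eventually_isCont])

lemma hol_at_inverse:
  assumes f: "hol_at f p" "f p \<noteq> 0"
  shows "hol_at (\<lambda>v. inverse (f v)) p"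
proof -
  obtain S where S: "p \<in> S" "hol_on S f" using f unfolding hol_at_iff_hol_on by blast
  have "continuous_on S f" using hol_on_continuous_on[OF S(2)] .
  then have o: "open (S \<inter> f -` (-{0}))"
    using hol_on_open[OF S(2)] by (intro continuous_open_preimage) auto
  have "hol_on (S \<inter> f -` (-{0})) f" using S(2) o by (rule hol_on_subset) auto
  then have "hol_on (S \<inter> f -` (-{0})) (\<lambda>v. inverse (f v))" by (rule hol_on_inverse) auto
  moreover have "p \<in> S \<inter> f -` (-{0})" using S f by auto
  ultimately show ?thesis unfolding hol_at_iff_hol_on by (intro exI conjI)
qed

lemma hol_at_divide: "hol_at f p \<Longrightarrow> hol_at g p \<Longrightarrow> g p \<noteq> 0 \<Longrightarrow> hol_at (\<lambda>v. f v / g v) p"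
  unfolding divide_inverse by (intro hol_at_mult hol_at_inverse)

lemmas hol_at_intros = hol_at_const hol_at_fst hol_at_fst_snd hol_at_snd_snd
  hol_at_add hol_at_mult hol_at_uminus hol_at_diff hol_at_power hol_at_divide

lemma hol_at_compose3:
  assumes "hol_at g (F1 p, F2 p, F3 p)" "hol_at F1 p" "hol_at F2 p" "hol_at F3 p"
  shows "hol_at (\<lambda>q. g (F1 q, F2 q, F3 q)) p"
proof -
  obtain T where T: "(F1 p, F2 p, F3 p) \<in> T" "hol_on T g"
    using assms(1) unfolding hol_at_iff_hol_on by blast
  obtain S1 S2 S3 where S: "p \<in> S1" "hol_on S1 F1" "p \<in> S2" "hol_on S2 F2" "p \<in> S3" "hol_on S3 F3"
    using assms(2-4) unfolding hol_at_iff_hol_on by blast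
  let ?F = "\<lambda>q. (F1 q, F2 q, F3 q)"
  let ?S = "S1 \<inter> S2 \<inter> S3"
  have "open ?S" using S hol_on_open by blast
  then have F: "hol_on ?S F1" "hol_on ?S F2" "hol_on ?S F3"
    using S by (auto intro: hol_on_subset)
  have "continuous_on ?S ?F"
    using F by (intro continuous_intros hol_on_continuous_on)
  then have "open (?S \<inter> ?F -` T)"
    using \<open>open ?S\<close> hol_on_open[OF T(2)] by (rule continuous_open_preimage)
  then have "hol_on (?S \<inter> ?F -` T) (\<lambda>q. g (?F q))"
    using F by (intro hol_on_compose3[OF T(2)]) (auto intro: hol_on_subset)
  moreover have "p \<in> ?S \<inter> ?F -` T" using S T by auto
  ultimately show ?thesis unfolding hol_at_iff_hol_on by (intro exI conjI)
qed

lemma hol_at_compose: "hol3_at F p \<Longrightarrow> hol_at g (F p) \<Longrightarrow> hol_at (\<lambda>v. g (F v)) p"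
  using hol_at_compose3[of g "\<lambda>v. fst (F v)" p "\<lambda>v. fst (snd (F v))" "\<lambda>v. snd (snd (F v))"]
  by (simp add: hol3_at_def)

lemma hol3_at_compose: "hol3_at F p \<Longrightarrow> hol3_at G (F p) \<Longrightarrow> hol3_at (\<lambda>v. G (F v)) p"
  unfolding hol3_at_def[of G] hol3_at_def[of "\<lambda>v. G (F v)"] by (auto intro: hol_at_compose)

lemma hol3_at_eventually_isCont:
  assumes "hol3_at F p" shows "\<forall>\<^sub>F v in nhds p. isCont F v"
proof -
  have "\<forall>\<^sub>F v in nhds p. isCont (\<lambda>v. fst (F v)) v \<and> isCont (\<lambda>v. fst (snd (F v))) v
      \<and> isCont (\<lambda>v. snd (snd (F v))) v"
    using assms unfolding hol3_at_def by (intro eventually_conj hol_at_eventually_isCont) auto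
  then show ?thesis
  proof eventually_elim
    case (elim v)
    then have "isCont (\<lambda>v. (fst (F v), fst (snd (F v)), snd (snd (F v)))) v"
      by (intro continuous_Pair) auto
    then show ?case by simp
  qed
qed

lemma hol3_at_isCont: "hol3_at F p \<Longrightarrow> isCont F p"
  by (rule eventually_nhds_x_imp_x[OF hol3_at_eventually_isCont])

lemma isCont_eventually_nhds:
  "isCont f x \<Longrightarrow> eventually P (nhds (f x)) \<Longrightarrow> eventually (\<lambda>y. P (f y)) (nhds x)"
  by (metis filterlim_iff tendsto_at_iff_tendsto_nhds isCont_def)

lemma hol_at_eventually_ne_0: "hol_at f p \<Longrightarrow> f p \<noteq> 0 \<Longrightarrow> \<forall>\<^sub>F v in nhds p. f v \<noteq> 0"
  using isCont_eventually_nhds[OF hol_at_isCont, of f p "\<lambda>y. y \<noteq> 0"] t1_space_nhds[of "f p" 0]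
  by blast

section \<open>The Cauchy integral formula on a polydisc\<close>

definition polydisc :: "real \<Rightarrow> c3 set" where
  "polydisc R = ball 0 R \<times> ball 0 R \<times> ball 0 R"

abbreviation unit_cube :: "(real \<times> real \<times> real) set" where
  "unit_cube \<equiv> cbox (0, 0, 0) (1, 1, 1)"

definition torus :: "real \<Rightarrow> real \<times> real \<times> real \<Rightarrow> c3" where
  "torus R t = (circlepath 0 R (fst t), circlepath 0 R (fst (snd t)), circlepath 0 R (snd (snd t)))"

text \<open>Along \<open>w = circlepath 0 R s\<close> the Cauchy form \<open>dw / (2 \<pi> \<i> (w - u))\<close> becomes
  \<open>cauchy_kernel R u s ds\<close>, because \<open>dw = 2 \<pi> \<i> w ds\<close>.\<close>
definition cauchy_kernel :: "real \<Rightarrow> complex \<Rightarrow> real \<Rightarrow> complex" where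
  "cauchy_kernel R u s = circlepath 0 R s / (circlepath 0 R s - u)"

definition divided_kernel :: "real \<Rightarrow> complex \<Rightarrow> real \<Rightarrow> complex" where
  "divided_kernel R u s = 1 / (circlepath 0 R s - u)"

lemma polydisc_iff:
  "v \<in> polydisc R \<longleftrightarrow> norm (fst v) < R \<and> norm (fst (snd v)) < R \<and> norm (snd (snd v)) < R"
  unfolding polydisc_def by (cases v) auto

lemma open_polydisc: "open (polydisc R)"
  unfolding polydisc_def by (intro open_Times open_ball)

lemma convex_polydisc: "convex (polydisc R)"
  unfolding polydisc_def by (intro convex_Times convex_ball)

lemma norm_circlepath_0: "R \<ge> 0 \<Longrightarrow> norm (circlepath 0 R s) = R"
  by (simp add: circlepath norm_mult)

lemma circlepath_0_minus_ne: "norm u < R \<Longrightarrow> circlepath 0 R s - u \<noteq> 0"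
  using norm_circlepath_0[of R s] norm_ge_zero[of u] by auto

lemma continuous_on_circlepath_0: "continuous_on A (circlepath 0 R)"
  unfolding circlepath by (intro continuous_intros)

lemma continuous_on_kernels:
  assumes "continuous_on A u" "continuous_on A s" "\<And>q. q \<in> A \<Longrightarrow> norm (u q) < R"
  shows "continuous_on A (\<lambda>q. cauchy_kernel R (u q) (s q))"
    and "continuous_on A (\<lambda>q. divided_kernel R (u q) (s q))"
  unfolding cauchy_kernel_def divided_kernel_def using assms circlepath_0_minus_ne
  by (auto intro!: continuous_intros continuous_on_compose2[OF continuous_on_circlepath_0])

lemma cauchy_kernel_has_field_derivative:
  "norm u < R \<Longrightarrow> ((\<lambda>u. cauchy_kernel R u s) has_field_derivative cauchy_kernel R u s * divided_kernel R u s) (at u)"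
  unfolding cauchy_kernel_def divided_kernel_def using circlepath_0_minus_ne[of u R s]
  by (auto intro!: derivative_eq_intros simp: power2_eq_square field_simps)

lemma divided_kernel_has_field_derivative:
  "norm u < R \<Longrightarrow> ((\<lambda>u. divided_kernel R u s) has_field_derivative (divided_kernel R u s)\<^sup>2) (at u)"
  unfolding divided_kernel_def using circlepath_0_minus_ne[of u R s]
  by (auto intro!: derivative_eq_intros simp: power2_eq_square field_simps)

lemma cauchy_kernel_diff_0:
  "norm u < R \<Longrightarrow> cauchy_kernel R u s - cauchy_kernel R 0 s = u * divided_kernel R u s"
proof -
  assume u: "norm u < R"
  then have "circlepath 0 R s - u \<noteq> 0" "circlepath 0 R s \<noteq> 0"
    using circlepath_0_minus_ne norm_circlepath_0[of R s] norm_ge_zero[of u] by force+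
  then show ?thesis unfolding cauchy_kernel_def divided_kernel_def by (simp add: field_simps)
qed

lemma Cauchy_integral_circlepath_0:
  assumes "G holomorphic_on A" "open A" "cball 0 R \<subseteq> A" "norm u < R"
  shows "G u = integral {0..1} (\<lambda>s. G (circlepath 0 R s) * cauchy_kernel R u s)"
proof -
  have "((\<lambda>w. G w / (w - u)) has_contour_integral (2 * of_real pi * \<i> * G u)) (circlepath 0 R)"
  proof (rule Cauchy_integral_circlepath)
    show "continuous_on (cball 0 R) G"
      using assms by (meson continuous_on_subset holomorphic_on_imp_continuous_on)
    show "G holomorphic_on ball 0 R"
      using assms by (meson ball_subset_cball holomorphic_on_subset order_trans)
  qed (use assms in simp)
  then have "contour_integral (circlepath 0 R) (\<lambda>w. G w / (w - u)) = 2 * of_real pi * \<i> * G u"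
    by (rule contour_integral_unique)
  then have "integral {0..1} (\<lambda>s. G (circlepath 0 R s) / (circlepath 0 R s - u) *
      vector_derivative (circlepath 0 R) (at s)) = 2 * of_real pi * \<i> * G u"
    unfolding contour_integral_integral .
  moreover have "G (circlepath 0 R s) / (circlepath 0 R s - u) * vector_derivative (circlepath 0 R) (at s)
      = 2 * of_real pi * \<i> * (G (circlepath 0 R s) * cauchy_kernel R u s)" for s
    unfolding vector_derivative_circlepath cauchy_kernel_def by (simp add: circlepath)
  ultimately show ?thesis by simp
qed

lemma hol_on_Cauchy_integral_line:
  assumes g: "hol_on S g" and S: "\<And>\<xi>. norm \<xi> \<le> R \<Longrightarrow> p + smul3 \<xi> u \<in> S" and "norm \<xi> < R"
  shows "g (p + smul3 \<xi> u) = integral {0..1} (\<lambda>s. g (p + smul3 (circlepath 0 R s) u) * cauchy_kernel R \<xi> s)"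
proof (rule Cauchy_integral_circlepath_0[where A = "{\<xi>. p + smul3 \<xi> u \<in> S}"])
  have line: "((\<lambda>\<xi>. p + smul3 \<xi> u) has_derivative (\<lambda>h. smul3 h u)) (at \<xi>)" for \<xi>
    unfolding smul3_def by (auto intro!: derivative_eq_intros simp: fun_eq_iff)
  show "(\<lambda>\<xi>. g (p + smul3 \<xi> u)) holomorphic_on {\<xi>. p + smul3 \<xi> u \<in> S}"
    unfolding holomorphic_on_def
  proof (intro ballI)
    fix \<xi> assume "\<xi> \<in> {\<xi>. p + smul3 \<xi> u \<in> S}"
    then obtain L where L: "(g has_derivative L) (at (p + smul3 \<xi> u))" "\<And>c v. L (smul3 c v) = c * L v"
      using g unfolding hol_on_def by blast
    have "((\<lambda>\<xi>. g (p + smul3 \<xi> u)) has_derivative (\<lambda>h. L u * h)) (at \<xi>)"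
      using diff_chain_at[OF line L(1)] by (simp add: o_def L(2) mult.commute)
    then have "((\<lambda>\<xi>. g (p + smul3 \<xi> u)) has_field_derivative L u) (at \<xi> within {\<xi>. p + smul3 \<xi> u \<in> S})"
      unfolding has_field_derivative_def by (rule has_derivative_at_withinI)
    then show "(\<lambda>\<xi>. g (p + smul3 \<xi> u)) field_differentiable at \<xi> within {\<xi>. p + smul3 \<xi> u \<in> S}"
      unfolding field_differentiable_def by blast
  qed
  have "continuous_on UNIV (\<lambda>\<xi>::complex. p + smul3 \<xi> u)"
    unfolding smul3_def by (intro continuous_intros)
  then show "open {\<xi>. p + smul3 \<xi> u \<in> S}"
    using hol_on_open[OF g] by (metis (no_types) open_UNIV open_vimage vimage_def)
qed (use assms in auto)

lemma torus_in_cball: "R \<ge> 0 \<Longrightarrow> torus R t \<in> cball 0 R \<times> cball 0 R \<times> cball 0 R"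
  by (simp add: torus_def norm_circlepath_0)

lemma continuous_on_compose_torus:
  assumes "hol_on S g" "cball 0 R \<times> cball 0 R \<times> cball 0 R \<subseteq> S" "R \<ge> 0"
  shows "continuous_on A (\<lambda>t. g (torus R t))"
proof (rule continuous_on_compose2[OF hol_on_continuous_on[OF assms(1)]])
  show "continuous_on A (torus R)"
    unfolding torus_def
    by (intro continuous_intros continuous_on_compose2[OF continuous_on_circlepath_0]) auto
qed (use assms torus_in_cball in blast)

lemma Cauchy_integral_polydisc:
  assumes g: "hol_on S g" and S: "cball 0 R \<times> cball 0 R \<times> cball 0 R \<subseteq> S"
    and p: "(x, y, z) \<in> polydisc R"
  shows "g (x, y, z) = integral unit_cube (\<lambda>t. g (torus R t) *
           (cauchy_kernel R x (fst t) * cauchy_kernel R y (fst (snd t)) * cauchy_kernel R z (snd (snd t))))"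
    (is "_ = integral _ ?F")
proof -
  have xyz: "norm x < R" "norm y < R" "norm z < R" using p by (auto simp: polydisc_iff)
  then have R: "R \<ge> 0" using norm_ge_zero[of x] by linarith
  let ?\<gamma> = "circlepath 0 R"
  have \<gamma>: "norm (?\<gamma> s) \<le> R" for s using norm_circlepath_0[OF R] by simp
  have in_S: "(a, b, c) \<in> S" if "norm a \<le> R" "norm b \<le> R" "norm c \<le> R" for a b c
    using that S by auto
  have c1: "g (x, y, z) = integral {0..1} (\<lambda>s1. g (?\<gamma> s1, y, z) * cauchy_kernel R x s1)"
    using hol_on_Cauchy_integral_line[OF g, of R "(0, y, z)" "(1, 0, 0)" x] xyz
    by (simp add: smul3_def in_S less_imp_le)
  have c2: "g (?\<gamma> s1, y, z) = integral {0..1} (\<lambda>s2. g (?\<gamma> s1, ?\<gamma> s2, z) * cauchy_kernel R y s2)" for s1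
    using hol_on_Cauchy_integral_line[OF g, of R "(?\<gamma> s1, 0, z)" "(0, 1, 0)" y] xyz \<gamma>
    by (simp add: smul3_def in_S less_imp_le)
  have c3: "g (?\<gamma> s1, ?\<gamma> s2, z) = integral {0..1} (\<lambda>s3. g (?\<gamma> s1, ?\<gamma> s2, ?\<gamma> s3) * cauchy_kernel R z s3)"
    for s1 s2
    using hol_on_Cauchy_integral_line[OF g, of R "(?\<gamma> s1, ?\<gamma> s2, 0)" "(0, 0, 1)" z] xyz \<gamma>
    by (simp add: smul3_def in_S)
  have cont: "continuous_on UNIV ?F"
    using xyz by (intro continuous_intros continuous_on_compose_torus[OF g S R] continuous_on_kernels) auto
  have "integral unit_cube ?F = integral (cbox 0 1) (\<lambda>s1. integral (cbox (0, 0) (1, 1)) (\<lambda>s23. ?F (s1, s23)))"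
    by (rule integral_prod_continuous) (rule continuous_on_subset[OF cont], simp)
  also have "\<dots> = integral (cbox 0 1) (\<lambda>s1. integral (cbox 0 1) (\<lambda>s2. integral (cbox 0 1) (\<lambda>s3. ?F (s1, s2, s3))))"
  proof (rule integral_cong)
    fix s1 :: real
    have "continuous_on UNIV (\<lambda>s23. ?F (s1, s23))"
      by (rule continuous_on_compose2[OF cont]) (auto intro!: continuous_intros)
    then show "integral (cbox (0, 0) (1, 1)) (\<lambda>s23. ?F (s1, s23))
        = integral (cbox 0 1) (\<lambda>s2. integral (cbox 0 1) (\<lambda>s3. ?F (s1, s2, s3)))"
      by (subst integral_prod_continuous) (auto intro: continuous_on_subset)
  qed
  also have "\<dots> = g (x, y, z)"
    unfolding c1 cbox_interval
  proof (rule integral_cong)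
    fix s1
    show "integral {0..1} (\<lambda>s2. integral {0..1} (\<lambda>s3. ?F (s1, s2, s3))) = g (?\<gamma> s1, y, z) * cauchy_kernel R x s1"
      unfolding c2
    proof (simp only: integral_mult_left[symmetric], rule integral_cong)
      fix s2
      show "integral {0..1} (\<lambda>s3. ?F (s1, s2, s3)) = g (?\<gamma> s1, ?\<gamma> s2, z) * cauchy_kernel R y s2 * cauchy_kernel R x s1"
        unfolding c3
        by (simp only: integral_mult_left[symmetric], rule integral_cong) (simp add: torus_def algebra_simps)
    qed
  qed
  finally show ?thesis ..
qed

lemma hol_on_integral_unit_cube:
  fixes K Kx Ky Kz :: "c3 \<Rightarrow> real \<times> real \<times> real \<Rightarrow> complex"
  assumes U: "open U" "convex U"
    and K: "\<And>p t. p \<in> U \<Longrightarrow> t \<in> unit_cube \<Longrightarrow> ((\<lambda>p. K p t) has_derivative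
              (\<lambda>h. Kx p t * fst h + Ky p t * fst (snd h) + Kz p t * snd (snd h))) (at p)"
    and int: "\<And>p. p \<in> U \<Longrightarrow> continuous_on unit_cube (K p)"
    and cont: "continuous_on (U \<times> unit_cube) (\<lambda>(p, t). Kx p t)"
      "continuous_on (U \<times> unit_cube) (\<lambda>(p, t). Ky p t)"
      "continuous_on (U \<times> unit_cube) (\<lambda>(p, t). Kz p t)"
  shows "hol_on U (\<lambda>p. integral unit_cube (K p))"
  unfolding hol_on_def
proof (intro conjI ballI)
  define D where "D p t = (blinfun_mult_right (Kx p t) o\<^sub>L fst_blinfun)
    + (blinfun_mult_right (Ky p t) o\<^sub>L (fst_blinfun o\<^sub>L snd_blinfun))
    + (blinfun_mult_right (Kz p t) o\<^sub>L (snd_blinfun o\<^sub>L snd_blinfun))" for p t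
  have D: "blinfun_apply (D p t) h = Kx p t * fst h + Ky p t * fst (snd h) + Kz p t * snd (snd h)" for p t h
    by (simp add: D_def blinfun.add_left mult.commute)
  have cont_D: "continuous_on (U \<times> unit_cube) (\<lambda>(p, t). D p t)"
    using cont unfolding D_def case_prod_beta by (intro continuous_intros)
  show "open U" by (fact U)
  fix p0 assume p0: "p0 \<in> U"
  have "((\<lambda>p. integral unit_cube (K p)) has_derivative blinfun_apply (integral unit_cube (D p0))) (at p0 within U)"
  proof (rule leibniz_rule[where fx = D])
    fix p t assume "p \<in> U" "t \<in> unit_cube"
    moreover have "blinfun_apply (D p t) = (\<lambda>h. Kx p t * fst h + Ky p t * fst (snd h) + Kz p t * snd (snd h))"
      by (simp add: D fun_eq_iff)
    ultimately show "((\<lambda>p. K p t) has_derivative blinfun_apply (D p t)) (at p within U)"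
      using K by (simp add: has_derivative_at_withinI)
  next
    show "K p integrable_on unit_cube" if "p \<in> U" for p
      using int[OF that] by (rule integrable_continuous)
  qed (use cont_D U p0 in auto)
  then have deriv: "((\<lambda>p. integral unit_cube (K p)) has_derivative blinfun_apply (integral unit_cube (D p0))) (at p0)"
    using at_within_open[OF p0 U(1)] by metis
  have "continuous_on unit_cube (\<lambda>t. (\<lambda>(p, t). D p t) (p0, t))"
    by (rule continuous_on_compose2[OF cont_D]) (use p0 in \<open>auto intro!: continuous_intros\<close>)
  then have int_D: "D p0 integrable_on unit_cube" by (simp add: integrable_continuous)
  have "blinfun_apply (integral unit_cube (D p0)) (smul3 c v) = c * blinfun_apply (integral unit_cube (D p0)) v" for c v
    by (simp add: blinfun_apply_integral[OF int_D] D smul3_def algebra_simps flip: integral_mult_right)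
  with deriv show "\<exists>L. ((\<lambda>p. integral unit_cube (K p)) has_derivative L) (at p0) \<and> (\<forall>c v. L (smul3 c v) = c * L v)"
    by blast
qed

text \<open>The difference quotient \<open>(g (x, y, z) - g (0, y, z)) / x\<close>, written as a Cauchy integral over the
  torus so that its holomorphy follows by differentiating under the integral sign.\<close>
definition fst_quotient :: "(c3 \<Rightarrow> complex) \<Rightarrow> real \<Rightarrow> c3 \<Rightarrow> complex" where
  "fst_quotient g R p = integral unit_cube (\<lambda>t. g (torus R t) * (divided_kernel R (fst p) (fst t) *
     cauchy_kernel R (fst (snd p)) (fst (snd t)) * cauchy_kernel R (snd (snd p)) (snd (snd t))))"

lemma fst_quotient_eq:
  assumes g: "hol_on S g" and S: "cball 0 R \<times> cball 0 R \<times> cball 0 R \<subseteq> S"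
    and p: "(x, y, z) \<in> polydisc R"
  shows "g (x, y, z) - g (0, y, z) = x * fst_quotient g R (x, y, z)"
proof -
  have xyz: "norm x < R" "norm y < R" "norm z < R" using p by (auto simp: polydisc_iff)
  have R: "R > 0" using xyz(1) norm_ge_zero[of x] by linarith
  then have p0: "(0, y, z) \<in> polydisc R" using xyz by (simp add: polydisc_iff)
  define F where "F u t = g (torus R t) * (cauchy_kernel R u (fst t) *
    cauchy_kernel R y (fst (snd t)) * cauchy_kernel R z (snd (snd t)))" for u t
  have int: "F u integrable_on unit_cube" if "norm u < R" for u
    unfolding F_def using that xyz
    by (intro integrable_continuous continuous_intros continuous_on_compose_torus[OF g S less_imp_le[OF R]] continuous_on_kernels)
       auto
  have "g (x, y, z) = integral unit_cube (F x)" "g (0, y, z) = integral unit_cube (F 0)"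
    using Cauchy_integral_polydisc[OF g S p] Cauchy_integral_polydisc[OF g S p0] unfolding F_def .
  then have "g (x, y, z) - g (0, y, z) = integral unit_cube (\<lambda>t. F x t - F 0 t)"
    using int[OF xyz(1)] int[of 0] R by (simp add: integral_diff)
  also have "\<dots> = integral unit_cube (\<lambda>t. x * (g (torus R t) * (divided_kernel R x (fst t) *
      cauchy_kernel R y (fst (snd t)) * cauchy_kernel R z (snd (snd t)))))"
  proof (rule integral_cong)
    fix t :: "real \<times> real \<times> real"
    have "F x t - F 0 t = g (torus R t) * ((cauchy_kernel R x (fst t) - cauchy_kernel R 0 (fst t)) *
        cauchy_kernel R y (fst (snd t)) * cauchy_kernel R z (snd (snd t)))"
      by (simp add: F_def algebra_simps)
    then show "F x t - F 0 t = x * (g (torus R t) * (divided_kernel R x (fst t) *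
        cauchy_kernel R y (fst (snd t)) * cauchy_kernel R z (snd (snd t))))"
      by (simp add: cauchy_kernel_diff_0[OF xyz(1)])
  qed
  finally show ?thesis by (simp add: fst_quotient_def)
qed

lemma has_derivative_coordinate_product:
  fixes a b c :: "complex \<Rightarrow> complex" and p :: c3
  assumes a: "(a has_field_derivative a') (at (fst p))" and b: "(b has_field_derivative b') (at (fst (snd p)))"
    and c: "(c has_field_derivative c') (at (snd (snd p)))"
  shows "((\<lambda>p. a (fst p) * b (fst (snd p)) * c (snd (snd p))) has_derivative (\<lambda>h.
      a' * b (fst (snd p)) * c (snd (snd p)) * fst h + a (fst p) * b' * c (snd (snd p)) * fst (snd h)
      + a (fst p) * b (fst (snd p)) * c' * snd (snd h))) (at p)"
proof -
  have "((\<lambda>p. a (fst p)) has_derivative (\<lambda>h. a' * fst h)) (at p)"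
    by (rule has_derivative_compose[OF has_derivative_fst[OF has_derivative_ident] a[unfolded has_field_derivative_def]])
  moreover have "((\<lambda>p. b (fst (snd p))) has_derivative (\<lambda>h. b' * fst (snd h))) (at p)"
    by (rule has_derivative_compose[OF has_derivative_fst[OF has_derivative_snd[OF has_derivative_ident]]
          b[unfolded has_field_derivative_def]])
  moreover have "((\<lambda>p. c (snd (snd p))) has_derivative (\<lambda>h. c' * snd (snd h))) (at p)"
    by (rule has_derivative_compose[OF has_derivative_snd[OF has_derivative_snd[OF has_derivative_ident]]
          c[unfolded has_field_derivative_def]])
  ultimately show ?thesis
    by (rule has_derivative_eq_rhs[OF has_derivative_mult[OF has_derivative_mult]]) (simp add: fun_eq_iff algebra_simps)
qed

lemma hol_on_fst_quotient:
  assumes g: "hol_on S g" and S: "cball 0 R \<times> cball 0 R \<times> cball 0 R \<subseteq> S"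
  shows "hol_on (polydisc R) (fst_quotient g R)"
proof (cases "R \<ge> 0")
  case False
  then have "polydisc R = {}" by (auto simp: polydisc_def)
  then show ?thesis by (simp add: hol_on_def)
next
  case R: True
  let ?G = "\<lambda>t. g (torus R t)" and ?k = "cauchy_kernel R" and ?d = "divided_kernel R"
  have x: "norm (fst p) < R" and y: "norm (fst (snd p)) < R" and z: "norm (snd (snd p)) < R"
    if "p \<in> polydisc R" for p
    using that by (auto simp: polydisc_iff)
  define Kx where "Kx p t = ?G t * ((?d (fst p) (fst t))\<^sup>2 * ?k (fst (snd p)) (fst (snd t)) * ?k (snd (snd p)) (snd (snd t)))"
    for p t
  define Ky where "Ky p t = ?G t * (?d (fst p) (fst t) * (?k (fst (snd p)) (fst (snd t)) * ?d (fst (snd p)) (fst (snd t)))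
    * ?k (snd (snd p)) (snd (snd t)))" for p t
  define Kz where "Kz p t = ?G t * (?d (fst p) (fst t) * ?k (fst (snd p)) (fst (snd t))
    * (?k (snd (snd p)) (snd (snd t)) * ?d (snd (snd p)) (snd (snd t))))" for p t
  show ?thesis
    unfolding fst_quotient_def
  proof (rule hol_on_integral_unit_cube[where Kx = Kx and Ky = Ky and Kz = Kz])
    fix p :: c3 and t :: "real \<times> real \<times> real"
    assume p: "p \<in> polydisc R"
    show "((\<lambda>p. ?G t * (?d (fst p) (fst t) * ?k (fst (snd p)) (fst (snd t)) * ?k (snd (snd p)) (snd (snd t))))
        has_derivative (\<lambda>h. Kx p t * fst h + Ky p t * fst (snd h) + Kz p t * snd (snd h))) (at p)"
      by (rule has_derivative_eq_rhs, rule has_derivative_mult[OF has_derivative_const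
            has_derivative_coordinate_product[OF divided_kernel_has_field_derivative[OF x[OF p]]
              cauchy_kernel_has_field_derivative[OF y[OF p]] cauchy_kernel_has_field_derivative[OF z[OF p]]]])
         (simp add: fun_eq_iff Kx_def Ky_def Kz_def algebra_simps)
  next
    have cG: "continuous_on (polydisc R \<times> unit_cube) (\<lambda>q. ?G (snd q))"
      by (rule continuous_on_compose2[OF continuous_on_compose_torus[OF g S R, of UNIV]])
         (auto intro!: continuous_intros)
    have "norm (fst (fst q)) < R" "norm (fst (snd (fst q))) < R" "norm (snd (snd (fst q))) < R"
      if "q \<in> polydisc R \<times> unit_cube" for q
      using x y z that by auto
    then have ck: "continuous_on (polydisc R \<times> unit_cube) (\<lambda>q. ?k (fst (fst q)) (fst (snd q)))"
      "continuous_on (polydisc R \<times> unit_cube) (\<lambda>q. ?d (fst (fst q)) (fst (snd q)))"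
      "continuous_on (polydisc R \<times> unit_cube) (\<lambda>q. ?k (fst (snd (fst q))) (fst (snd (snd q))))"
      "continuous_on (polydisc R \<times> unit_cube) (\<lambda>q. ?d (fst (snd (fst q))) (fst (snd (snd q))))"
      "continuous_on (polydisc R \<times> unit_cube) (\<lambda>q. ?k (snd (snd (fst q))) (snd (snd (snd q))))"
      "continuous_on (polydisc R \<times> unit_cube) (\<lambda>q. ?d (snd (snd (fst q))) (snd (snd (snd q))))"
      by (intro continuous_on_kernels continuous_intros; blast)+
    show "continuous_on (polydisc R \<times> unit_cube) (\<lambda>(p, t). Kx p t)"
      "continuous_on (polydisc R \<times> unit_cube) (\<lambda>(p, t). Ky p t)"
      "continuous_on (polydisc R \<times> unit_cube) (\<lambda>(p, t). Kz p t)"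
      unfolding case_prod_beta Kx_def Ky_def Kz_def by (intro continuous_intros cG ck)+
  next
    fix p assume p: "p \<in> polydisc R"
    show "continuous_on unit_cube (\<lambda>t. ?G t * (?d (fst p) (fst t) *
        ?k (fst (snd p)) (fst (snd t)) * ?k (snd (snd p)) (snd (snd t))))"
      using x[OF p] y[OF p] z[OF p]
      by (auto intro!: continuous_intros continuous_on_compose_torus[OF g S R] continuous_on_kernels)
  qed (simp_all add: open_polydisc convex_polydisc)
qed

section \<open>Division by a coordinate\<close>

definition germ_dvd :: "(c3 \<Rightarrow> complex) \<Rightarrow> (c3 \<Rightarrow> complex) \<Rightarrow> bool" where
  "germ_dvd \<kappa> g \<longleftrightarrow> (\<exists>h. hol_at h 0 \<and> (\<forall>\<^sub>F v in nhds 0. g v = \<kappa> v * h v))"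

lemma cball_cube_subset_ball:
  assumes "3 * r < e"
  shows "cball 0 r \<times> cball 0 r \<times> cball 0 r \<subseteq> ball (0::c3) e"
proof
  fix v :: c3 assume v: "v \<in> cball 0 r \<times> cball 0 r \<times> cball 0 r"
  have "norm v \<le> norm (fst v) + (norm (fst (snd v)) + norm (snd (snd v)))"
    using norm_Pair_le[of "fst v" "snd v"] norm_Pair_le[of "fst (snd v)" "snd (snd v)"] by simp
  also have "\<dots> \<le> 3 * r" using v by (auto simp: mem_Times_iff)
  finally show "v \<in> ball 0 e" using assms by simp
qed

lemma germ_dvd_fst:
  assumes g: "hol_at g 0" and vanish: "\<forall>\<^sub>F v in nhds 0. fst v = 0 \<longrightarrow> g v = 0"
  shows "germ_dvd fst g"
proof -
  obtain S where S: "0 \<in> S" "hol_on S g" using g unfolding hol_at_iff_hol_on by blast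
  obtain T where T: "open T" "0 \<in> T" "\<forall>v\<in>T. fst v = 0 \<longrightarrow> g v = 0"
    using vanish unfolding eventually_nhds by blast
  obtain e where e: "e > 0" "ball 0 e \<subseteq> S \<inter> T"
    using S T hol_on_open by (meson IntI open_Int open_contains_ball)
  define R where "R = e / 4"
  have cball: "cball 0 R \<times> cball 0 R \<times> cball 0 R \<subseteq> ball (0::c3) e"
    using e by (intro cball_cube_subset_ball) (simp add: R_def)
  have "hol_on (polydisc R) (fst_quotient g R)"
    using cball e by (intro hol_on_fst_quotient[OF S(2)]) auto
  moreover have "0 \<in> polydisc R" using e by (simp add: polydisc_iff R_def)
  ultimately have "hol_at (fst_quotient g R) 0"
    unfolding hol_at_iff_hol_on by (intro exI conjI)
  moreover have "g v = fst v * fst_quotient g R v" if p: "v \<in> polydisc R" for v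
  proof -
    obtain x y z where v: "v = (x, y, z)" by (cases v)
    have "(0, y, z) \<in> cball 0 R \<times> cball 0 R \<times> cball 0 R"
      using p e by (auto simp: v polydisc_iff R_def)
    then have "(0, y, z) \<in> T" using cball e(2) by blast
    then have "g (0, y, z) = 0" using T(3) by simp
    then show ?thesis
      using fst_quotient_eq[OF S(2) _ p[unfolded v]] cball e by (auto simp: v)
  qed
  then have "\<forall>\<^sub>F v in nhds 0. g v = fst v * fst_quotient g R v"
    using open_polydisc \<open>0 \<in> polydisc R\<close> unfolding eventually_nhds by blast
  ultimately show ?thesis unfolding germ_dvd_def by blast
qed

lemma germ_dvd_cong:
  assumes "germ_dvd \<kappa> f" "\<forall>\<^sub>F v in nhds 0. g v = f v"
  shows "germ_dvd \<kappa> g"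
proof -
  obtain h where h: "hol_at h 0" "\<forall>\<^sub>F v in nhds 0. f v = \<kappa> v * h v"
    using assms(1) unfolding germ_dvd_def by blast
  have "\<forall>\<^sub>F v in nhds 0. g v = \<kappa> v * h v"
    using assms(2) h(2) by eventually_elim simp
  with h(1) show ?thesis unfolding germ_dvd_def by blast
qed

lemma germ_dvd_add:
  assumes "germ_dvd \<kappa> f" "germ_dvd \<kappa> g"
  shows "germ_dvd \<kappa> (\<lambda>v. f v + g v)"
proof -
  obtain h1 h2 where "hol_at h1 0" "\<forall>\<^sub>F v in nhds 0. f v = \<kappa> v * h1 v"
    "hol_at h2 0" "\<forall>\<^sub>F v in nhds 0. g v = \<kappa> v * h2 v"
    using assms unfolding germ_dvd_def by blast
  then show ?thesis
    unfolding germ_dvd_def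
    by (intro exI[of _ "\<lambda>v. h1 v + h2 v"] conjI hol_at_add)
       (auto elim: eventually_elim2 simp: distrib_left)
qed

lemma germ_dvd_mult:
  assumes "germ_dvd \<kappa> f" "germ_dvd \<iota> g"
  shows "germ_dvd (\<lambda>v. \<kappa> v * \<iota> v) (\<lambda>v. f v * g v)"
proof -
  obtain h1 h2 where "hol_at h1 0" "\<forall>\<^sub>F v in nhds 0. f v = \<kappa> v * h1 v"
    "hol_at h2 0" "\<forall>\<^sub>F v in nhds 0. g v = \<iota> v * h2 v"
    using assms unfolding germ_dvd_def by blast
  then show ?thesis
    unfolding germ_dvd_def
    by (intro exI[of _ "\<lambda>v. h1 v * h2 v"] conjI hol_at_mult)
       (auto elim: eventually_elim2 simp: ac_simps)
qed

lemma germ_dvd_sum: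
  "finite I \<Longrightarrow> (\<And>i. i \<in> I \<Longrightarrow> germ_dvd \<kappa> (f i)) \<Longrightarrow> germ_dvd \<kappa> (\<lambda>v. \<Sum>i\<in>I. f i v)"
proof (induction I rule: finite_induct)
  case empty
  show ?case unfolding germ_dvd_def by (auto intro!: exI[of _ "\<lambda>v. 0"] hol_at_const)
qed (simp add: germ_dvd_add)

lemma germ_dvd_compose:
  assumes "germ_dvd \<kappa> g" "hol3_at \<theta> 0" "\<theta> 0 = 0"
  shows "germ_dvd (\<lambda>v. \<kappa> (\<theta> v)) (\<lambda>v. g (\<theta> v))"
proof -
  obtain h where h: "hol_at h 0" "\<forall>\<^sub>F v in nhds (\<theta> 0). g v = \<kappa> v * h v"
    using assms unfolding germ_dvd_def by auto
  have "hol_at (\<lambda>v. h (\<theta> v)) 0" using assms(2,3) h(1) by (simp add: hol_at_compose)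
  moreover have "\<forall>\<^sub>F v in nhds 0. g (\<theta> v) = \<kappa> (\<theta> v) * h (\<theta> v)"
    by (rule isCont_eventually_nhds[OF hol3_at_isCont[OF assms(2)] h(2)])
  ultimately show ?thesis unfolding germ_dvd_def by blast
qed

lemma germ_dvd_in_m2:
  assumes dvd: "\<And>a. in_m a \<Longrightarrow> germ_dvd \<kappa> (\<lambda>v. a (\<sigma> v))"
    and \<sigma>: "isCont \<sigma> 0" "\<sigma> 0 = 0" and P: "in_m2 P"
  shows "germ_dvd (\<lambda>v. \<kappa> v * \<kappa> v) (\<lambda>v. P (\<sigma> v))"
proof -
  obtain n :: nat and a b where ab: "\<forall>i<n. in_m (a i) \<and> in_m (b i)"
    and P_eq: "\<forall>\<^sub>F v in nhds 0. P v = (\<Sum>i<n. a i v * b i v)"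
    using P unfolding in_m2_def by blast
  have "germ_dvd (\<lambda>v. \<kappa> v * \<kappa> v) (\<lambda>v. \<Sum>i<n. a i (\<sigma> v) * b i (\<sigma> v))"
    using ab by (intro germ_dvd_sum germ_dvd_mult dvd) auto
  moreover have "\<forall>\<^sub>F v in nhds 0. P (\<sigma> v) = (\<Sum>i<n. a i (\<sigma> v) * b i (\<sigma> v))"
    using isCont_eventually_nhds[OF \<sigma>(1)] P_eq \<sigma>(2) by simp
  ultimately show ?thesis by (rule germ_dvd_cong)
qed

definition swap12 :: "c3 \<Rightarrow> c3" where
  "swap12 v = (fst (snd v), fst v, snd (snd v))"

definition swap13 :: "c3 \<Rightarrow> c3" where
  "swap13 v = (snd (snd v), fst (snd v), fst v)"

lemma swap12_swap12 [simp]: "swap12 (swap12 v) = v"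
  and swap12_0 [simp]: "swap12 0 = 0"
  and swap13_0 [simp]: "swap13 0 = 0"
  by (simp_all add: swap12_def swap13_def zero_prod_def)

lemma hol3_at_swap12: "hol3_at swap12 p"
  and hol3_at_swap13: "hol3_at swap13 p"
  by (simp_all add: hol3_at_def swap12_def swap13_def hol_at_intros)

lemma germ_dvd_snd_snd:
  assumes g: "hol_at g 0" and vanish: "\<forall>\<^sub>F v in nhds 0. snd (snd v) = 0 \<longrightarrow> g v = 0"
  shows "germ_dvd (\<lambda>v. snd (snd v)) g"
proof -
  have hol: "hol_at (\<lambda>v. g (swap13 v)) 0"
    using g by (simp add: hol_at_compose hol3_at_swap13)
  have "\<forall>\<^sub>F v in nhds (swap13 0). snd (snd v) = 0 \<longrightarrow> g v = 0"
    using vanish by simp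
  from isCont_eventually_nhds[OF hol3_at_isCont[OF hol3_at_swap13] this]
  have "\<forall>\<^sub>F v in nhds 0. fst v = 0 \<longrightarrow> g (swap13 v) = 0"
    by (simp add: swap13_def)
  with hol have "germ_dvd fst (\<lambda>v. g (swap13 v))" by (rule germ_dvd_fst)
  from germ_dvd_compose[OF this hol3_at_swap13 swap13_0] show ?thesis
    by (simp add: swap13_def)
qed

section \<open>Pull-backs to the charts of the blow-up\<close>

lemma in_m_compose: "in_m a \<Longrightarrow> hol3_at \<theta> 0 \<Longrightarrow> \<theta> 0 = 0 \<Longrightarrow> in_m (\<lambda>v. a (\<theta> v))"
  unfolding in_m_def by (simp add: hol_at_compose)

lemma in_m2_compose:
  assumes P: "in_m2 P" and \<theta>: "hol3_at \<theta> 0" "\<theta> 0 = 0"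
  shows "in_m2 (\<lambda>v. P (\<theta> v))"
proof -
  obtain n :: nat and a b where ab: "\<forall>i<n. in_m (a i) \<and> in_m (b i)"
    and P_eq: "\<forall>\<^sub>F v in nhds 0. P v = (\<Sum>i<n. a i v * b i v)"
    using P unfolding in_m2_def by blast
  have "\<forall>i<n. in_m (\<lambda>v. a i (\<theta> v)) \<and> in_m (\<lambda>v. b i (\<theta> v))"
    using ab \<theta> by (simp add: in_m_compose)
  moreover have "\<forall>\<^sub>F v in nhds 0. P (\<theta> v) = (\<Sum>i<n. a i (\<theta> v) * b i (\<theta> v))"
    using isCont_eventually_nhds[OF hol3_at_isCont[OF \<theta>(1)]] P_eq \<theta>(2) by simp
  ultimately show ?thesis unfolding in_m2_def
    by (intro exI[of _ n] exI[of _ "\<lambda>i v. a i (\<theta> v)"] exI[of _ "\<lambda>i v. b i (\<theta> v)"]) simp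
qed

lemma in_m2_mult: "in_m a \<Longrightarrow> in_m b \<Longrightarrow> in_m2 (\<lambda>v. a v * b v)"
  unfolding in_m2_def by (intro exI[of _ 1] exI[of _ "\<lambda>_. a"] exI[of _ "\<lambda>_. b"]) auto

lemma in_m2_add:
  assumes "in_m2 f" "in_m2 g"
  shows "in_m2 (\<lambda>v. f v + g v)"
proof -
  obtain n :: nat and a b where 1: "\<forall>i<n. in_m (a i) \<and> in_m (b i)"
    "\<forall>\<^sub>F v in nhds 0. f v = (\<Sum>i<n. a i v * b i v)"
    using assms(1) unfolding in_m2_def by blast
  obtain k :: nat and a' b' where 2: "\<forall>i<k. in_m (a' i) \<and> in_m (b' i)"
    "\<forall>\<^sub>F v in nhds 0. g v = (\<Sum>i<k. a' i v * b' i v)"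
    using assms(2) unfolding in_m2_def by blast
  define A where "A i = (if i < n then a i else a' (i - n))" for i
  define B where "B i = (if i < n then b i else b' (i - n))" for i
  have split: "(\<Sum>i<n + k. A i v * B i v) = (\<Sum>i<n. a i v * b i v) + (\<Sum>i<k. a' i v * b' i v)" for v
  proof -
    have "(\<Sum>i<n + k. A i v * B i v) = (\<Sum>i<n. A i v * B i v) + (\<Sum>i<k. A (n + i) v * B (n + i) v)"
      by (induction k) (simp_all add: add.assoc)
    then show ?thesis by (simp add: A_def B_def)
  qed
  have "\<forall>i<n + k. in_m (A i) \<and> in_m (B i)" using 1(1) 2(1) by (auto simp: A_def B_def)
  moreover have "\<forall>\<^sub>F v in nhds 0. f v + g v = (\<Sum>i<n + k. A i v * B i v)"
    using 1(2) 2(2) by eventually_elim (simp add: split)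
  ultimately show ?thesis unfolding in_m2_def by blast
qed

lemma chart1_apply: "chart1 v = (fst v, fst v * fst (snd v), fst v * snd (snd v))"
  and chart3_apply: "chart3 v = (fst v * snd (snd v), fst (snd v) * snd (snd v), snd (snd v))"
  by (cases v; simp add: chart1_def chart3_def)+

lemma hol3_at_chart1: "hol3_at chart1 p"
  and hol3_at_chart3: "hol3_at chart3 p"
  by (simp_all add: hol3_at_def chart1_apply chart3_apply hol_at_intros)

lemma germ_dvd_in_m_chart1: "in_m a \<Longrightarrow> germ_dvd fst (\<lambda>v. a (chart1 v))"
  unfolding in_m_def
  by (intro germ_dvd_fst hol_at_compose[OF hol3_at_chart1] always_eventually)
     (auto simp: chart1_apply zero_prod_def)

lemma germ_dvd_in_m_chart3: "in_m a \<Longrightarrow> germ_dvd (\<lambda>v. snd (snd v)) (\<lambda>v. a (chart3 v))"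
  unfolding in_m_def
  by (intro germ_dvd_snd_snd hol_at_compose[OF hol3_at_chart3] always_eventually)
     (auto simp: chart3_apply zero_prod_def)

section \<open>Uniqueness and symmetries of lifts\<close>

lemma eventually_eq_off_hyperplane:
  fixes f g :: "c3 \<Rightarrow> 'a::t2_space"
  assumes cont: "\<forall>\<^sub>F v in nhds 0. isCont f v \<and> isCont g v"
    and eq: "\<forall>\<^sub>F v in nhds 0. \<kappa> v \<noteq> 0 \<longrightarrow> f v = g v"
    and \<kappa>: "\<And>v e. \<kappa> (v + smul3 e u) = \<kappa> v + e"
  shows "\<forall>\<^sub>F v in nhds 0. f v = g v"
proof -
  obtain W where W: "open W" "0 \<in> W" "\<And>v. v \<in> W \<Longrightarrow> isCont f v \<and> isCont g v \<and> (\<kappa> v \<noteq> 0 \<longrightarrow> f v = g v)"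
    using eventually_conj[OF cont eq] unfolding eventually_nhds by blast
  have "f v = g v" if v: "v \<in> W" for v
  proof (cases "\<kappa> v = 0")
    case False then show ?thesis using W(3)[OF v] by blast
  next
    case True
    define l where "l e = v + smul3 e u" for e
    have l: "isCont l 0" "l 0 = v"
      unfolding l_def smul3_def by (intro continuous_intros) (simp add: zero_prod_def)
    then have "\<forall>\<^sub>F e in nhds 0. l e \<in> W"
      using isCont_eventually_nhds[OF l(1)] eventually_nhds_in_open[OF W(1) v] by simp
    then have ev: "\<forall>\<^sub>F e in at (0::complex). f (l e) = g (l e)"
      unfolding eventually_at_filter
    proof (rule eventually_mono)
      fix e :: complex assume "l e \<in> W"
      moreover have "\<kappa> (l e) = e" using True \<kappa> by (simp add: l_def)
      ultimately show "e \<noteq> 0 \<longrightarrow> e \<in> UNIV \<longrightarrow> f (l e) = g (l e)" using W(3) by auto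
    qed
    have tl: "(l \<longlongrightarrow> v) (at 0)" using l unfolding isCont_def by simp
    have "((\<lambda>e. f (l e)) \<longlongrightarrow> f v) (at 0)"
      by (rule isCont_tendsto_compose[OF _ tl]) (use W(3)[OF v] in blast)
    then have "((\<lambda>e. g (l e)) \<longlongrightarrow> f v) (at 0)"
      by (rule Lim_transform_eventually[OF _ ev])
    moreover have "((\<lambda>e. g (l e)) \<longlongrightarrow> g v) (at 0)"
      by (rule isCont_tendsto_compose[OF _ tl]) (use W(3)[OF v] in blast)
    ultimately show ?thesis by (rule tendsto_unique[OF at_neq_bot])
  qed
  with W(1,2) show ?thesis unfolding eventually_nhds by blast
qed

lemma is_lift_unique:
  assumes G: "is_lift \<sigma> f G" and G0: "is_lift \<sigma> f G0"
    and inj: "\<And>w w'. \<sigma> w = \<sigma> w' \<Longrightarrow> \<kappa> w' \<noteq> 0 \<Longrightarrow> w = w'"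
    and nz: "\<forall>\<^sub>F v in nhds 0. \<kappa> v \<noteq> 0 \<longrightarrow> \<kappa> (G0 v) \<noteq> 0"
    and \<kappa>: "\<And>v e. \<kappa> (v + smul3 e u) = \<kappa> v + e"
  shows "\<forall>\<^sub>F v in nhds 0. G v = G0 v"
proof (rule eventually_eq_off_hyperplane[OF _ _ \<kappa>])
  show "\<forall>\<^sub>F v in nhds 0. isCont G v \<and> isCont G0 v"
    using G G0 unfolding is_lift_def by (auto intro: eventually_conj hol3_at_eventually_isCont)
  have "\<forall>\<^sub>F v in nhds 0. \<sigma> (G v) = f (\<sigma> v)" "\<forall>\<^sub>F v in nhds 0. \<sigma> (G0 v) = f (\<sigma> v)"
    using G G0 unfolding is_lift_def by blast+
  then show "\<forall>\<^sub>F v in nhds 0. \<kappa> v \<noteq> 0 \<longrightarrow> G v = G0 v"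
    using nz by eventually_elim (auto intro: inj)
qed

lemma germ_in_coords_cong:
  assumes "germ_in_coords G0 0 F" "\<forall>\<^sub>F v in nhds 0. G v = G0 v"
  shows "germ_in_coords G 0 F"
proof -
  obtain \<phi> where \<phi>: "loc_coords \<phi> 0" "\<forall>\<^sub>F v in nhds 0. G0 (\<phi> v) = \<phi> (F v)"
    using assms(1) unfolding germ_in_coords_def by blast
  have "isCont \<phi> 0" "\<phi> 0 = 0" using \<phi>(1) unfolding loc_coords_def by (auto intro: hol3_at_isCont)
  then have "\<forall>\<^sub>F v in nhds 0. G (\<phi> v) = G0 (\<phi> v)"
    using isCont_eventually_nhds[where f = \<phi> and x = 0] assms(2) by simp
  with \<phi>(2) have "\<forall>\<^sub>F v in nhds 0. G (\<phi> v) = \<phi> (F v)"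
    by eventually_elim simp
  with \<phi>(1) show ?thesis unfolding germ_in_coords_def by blast
qed

lemma simple_corner_cong:
  "simple_corner G0 0 \<Longrightarrow> (\<forall>\<^sub>F v in nhds 0. G v = G0 v) \<Longrightarrow> simple_corner G 0"
  unfolding simple_corner_def using germ_in_coords_cong by meson

lemma degenerate_spike_cong:
  "degenerate_spike G0 0 \<Longrightarrow> (\<forall>\<^sub>F v in nhds 0. G v = G0 v) \<Longrightarrow> degenerate_spike G 0"
  unfolding degenerate_spike_def using germ_in_coords_cong by meson

lemma chart2_swap12: "chart2 v = swap12 (chart1 (swap12 v))"
  by (cases v) (simp add: chart1_def chart2_def swap12_def mult.commute)

lemma spike_form_swap12:
  "swap12 (spike_form c lam mu P Q R (swap12 v))
     = spike_form c mu lam (\<lambda>v. Q (swap12 v)) (\<lambda>v. P (swap12 v)) (\<lambda>v. R (swap12 v)) v"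
  by (cases v) (simp add: spike_form_def swap12_def)

lemma is_lift_conj:
  assumes \<theta>: "\<And>p. hol3_at \<theta> p" "\<theta> 0 = 0" "\<And>v. \<theta> (\<theta> v) = v" and G: "is_lift \<sigma> f G"
  shows "is_lift (\<lambda>v. \<theta> (\<sigma> (\<theta> v))) (\<lambda>v. \<theta> (f (\<theta> v))) (\<lambda>v. \<theta> (G (\<theta> v)))"
  unfolding is_lift_def
proof
  have "hol3_at (\<lambda>v. G (\<theta> v)) 0"
    using hol3_at_compose[OF \<theta>(1), where p = 0 and G = G] G \<theta>(2) unfolding is_lift_def by simp
  then show "hol3_at (\<lambda>v. \<theta> (G (\<theta> v))) 0" using \<theta>(1) by (rule hol3_at_compose)
  have "\<forall>\<^sub>F v in nhds (\<theta> 0). \<sigma> (G v) = f (\<sigma> v)" using G \<theta>(2) unfolding is_lift_def by simp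
  from isCont_eventually_nhds[OF hol3_at_isCont[OF \<theta>(1)] this]
  show "\<forall>\<^sub>F v in nhds 0. \<theta> (\<sigma> (\<theta> (\<theta> (G (\<theta> v))))) = \<theta> (f (\<theta> (\<theta> (\<sigma> (\<theta> v)))))"
    by (auto simp: \<theta>(3) elim!: eventually_mono)
qed

lemma germ_in_coords_conj:
  assumes \<theta>: "\<And>p. hol3_at \<theta> p" "\<theta> 0 = 0" "\<And>v. \<theta> (\<theta> v) = v" and G: "germ_in_coords G 0 F"
  shows "germ_in_coords (\<lambda>v. \<theta> (G (\<theta> v))) 0 F"
proof -
  obtain \<phi> \<psi> where \<phi>: "hol3_at \<phi> 0" "\<phi> 0 = 0" and \<psi>: "hol3_at \<psi> 0" "\<psi> 0 = 0"
    and inv: "\<forall>\<^sub>F v in nhds 0. \<psi> (\<phi> v) = v" "\<forall>\<^sub>F w in nhds 0. \<phi> (\<psi> w) = w"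
    and conj: "\<forall>\<^sub>F v in nhds 0. G (\<phi> v) = \<phi> (F v)"
    using G unfolding germ_in_coords_def loc_coords_def by blast
  have "loc_coords (\<lambda>v. \<theta> (\<phi> v)) 0"
    unfolding loc_coords_def
  proof (intro conjI exI[of _ "\<lambda>w. \<psi> (\<theta> w)"])
    show "hol3_at (\<lambda>v. \<theta> (\<phi> v)) 0" using \<phi>(1) \<theta>(1) by (rule hol3_at_compose)
    show "hol3_at (\<lambda>w. \<psi> (\<theta> w)) 0"
      using hol3_at_compose[OF \<theta>(1), where p = 0 and G = \<psi>] \<psi>(1) \<theta>(2) by simp
    have "\<forall>\<^sub>F w in nhds (\<theta> 0). \<phi> (\<psi> w) = w" using inv(2) \<theta>(2) by simp
    from isCont_eventually_nhds[OF hol3_at_isCont[OF \<theta>(1)] this]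
    show "\<forall>\<^sub>F w in nhds 0. \<theta> (\<phi> (\<psi> (\<theta> w))) = w"
      by (auto simp: \<theta>(3) elim!: eventually_mono)
  qed (use \<phi>(2) \<psi>(2) \<theta> inv(1) in simp_all)
  moreover have "\<forall>\<^sub>F v in nhds 0. \<theta> (G (\<theta> (\<theta> (\<phi> v)))) = \<theta> (\<phi> (F v))"
    using conj by (auto simp: \<theta>(3) elim!: eventually_mono)
  ultimately show ?thesis unfolding germ_in_coords_def by blast
qed

lemma simple_corner_conj:
  assumes \<theta>: "\<And>p. hol3_at \<theta> p" "\<theta> 0 = 0" "\<And>v. \<theta> (\<theta> v) = v" and "simple_corner G 0"
  shows "simple_corner (\<lambda>v. \<theta> (G (\<theta> v))) 0"
  using assms(4) germ_in_coords_conj[OF \<theta>] unfolding simple_corner_def by meson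

section \<open>The lift in the charts at \<open>[1:0:0]\<close> and \<open>[0:1:0]\<close>\<close>

definition spike_chart1_unit :: "nat \<Rightarrow> complex \<Rightarrow> (c3 \<Rightarrow> complex) \<Rightarrow> c3 \<Rightarrow> complex" where
  "spike_chart1_unit c lam Ps v = 1 + (fst v * snd (snd v)) ^ c * (lam + fst v * Ps v)"

text \<open>If \<open>P, Q, R\<close> pull back to \<open>s\<^sup>2 Ps, s\<^sup>2 Qs, s Rs\<close> and \<open>m = (s r)\<^sup>c\<close>, the spike maps
  \<open>chart1 (s, t, r)\<close> to \<open>(s E, s (t + m (\<mu> t + s Qs)), s r (1 + m s Rs))\<close> with
  \<open>E = spike_chart1_unit\<close>; dividing the last two components by \<open>s E\<close> gives the lift.\<close>
definition spike_chart1_lift :: "nat \<Rightarrow> complex \<Rightarrow> complex \<Rightarrow> (c3 \<Rightarrow> complex) \<Rightarrow> (c3 \<Rightarrow> complex)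
    \<Rightarrow> (c3 \<Rightarrow> complex) \<Rightarrow> c3 \<Rightarrow> c3" where
  "spike_chart1_lift c lam mu Ps Qs Rs v =
     (let s = fst v; t = fst (snd v); r = snd (snd v); m = (s * r) ^ c; E = spike_chart1_unit c lam Ps v
      in (s * E, (t + m * (mu * t + s * Qs v)) / E, r * (1 + m * s * Rs v) / E))"

lemma hol_at_spike_chart1_unit: "hol_at Ps 0 \<Longrightarrow> hol_at (spike_chart1_unit c lam Ps) 0"
  unfolding spike_chart1_unit_def[abs_def] by (intro hol_at_intros)

lemma spike_chart1_unit_0: "c \<ge> 1 \<Longrightarrow> spike_chart1_unit c lam Ps 0 = 1"
  by (simp add: spike_chart1_unit_def)

lemma hol3_at_spike_chart1_lift:
  assumes "c \<ge> 1" "hol_at Ps 0" "hol_at Qs 0" "hol_at Rs 0"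
  shows "hol3_at (spike_chart1_lift c lam mu Ps Qs Rs) 0"
  using assms hol_at_spike_chart1_unit[OF assms(2)] spike_chart1_unit_0[OF assms(1)]
  unfolding hol3_at_def spike_chart1_lift_def Let_def by (auto intro!: hol_at_intros)

lemma chart1_spike_chart1_lift:
  assumes "P (chart1 v) = fst v * fst v * Ps v" "Q (chart1 v) = fst v * fst v * Qs v"
    "R (chart1 v) = fst v * Rs v" "spike_chart1_unit c lam Ps v \<noteq> 0"
  shows "chart1 (spike_chart1_lift c lam mu Ps Qs Rs v) = spike_form c lam mu P Q R (chart1 v)"
  using assms by (cases v) (simp add: chart1_apply spike_chart1_lift_def spike_chart1_unit_def Let_def
      spike_form_def field_simps)

lemma neg_not_pos_rat_multiple: "(l::complex) \<noteq> 0 \<Longrightarrow> \<not> (\<exists>q::rat. q > 0 \<and> - l = of_rat q * l)"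
proof
  assume l: "l \<noteq> 0" and "\<exists>q::rat. q > 0 \<and> - l = of_rat q * l"
  then obtain q :: rat where q: "q > 0" "- l = of_rat q * l" by blast
  have "(of_rat q + 1) * l = of_rat q * l + l" by (simp add: distrib_right)
  also have "\<dots> = 0" by (metis q(2) add.left_inverse)
  finally have "(of_rat q + 1) * l = 0" .
  then have "(of_rat q :: complex) = of_rat (-1)" using l by (simp add: add_eq_0_iff2)
  then show False using q(1) by (simp only: of_rat_eq_iff)
qed

lemma simple_corner_spike_chart1_lift:
  assumes c: "c \<ge> 1" and lam: "lam \<noteq> 0" and hol: "hol_at Ps 0" "hol_at Qs 0" "hol_at Rs 0"
  shows "simple_corner (spike_chart1_lift c lam mu Ps Qs Rs) 0"
proof -
  define \<phi> where "\<phi> v = (fst v, snd (snd v), fst (snd v))" for v :: c3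
  have hol_\<phi>: "hol3_at \<phi> p" for p unfolding hol3_at_def \<phi>_def by (simp add: hol_at_intros)
  have \<phi>0: "\<phi> 0 = 0" by (simp add: \<phi>_def zero_prod_def)
  have hol_comp: "hol_at (\<lambda>v. h (\<phi> v)) 0" if "hol_at h 0" for h
    using that \<phi>0 by (simp add: hol_at_compose[OF hol_\<phi>])
  define E where "E v = spike_chart1_unit c lam Ps (\<phi> v)" for v
  define m where "m v = (fst v * fst (snd v)) ^ c" for v :: c3
  define P' where "P' v = fst v * Ps (\<phi> v)" for v
  define Q' where "Q' v = (fst v * Rs (\<phi> v) - fst v * Ps (\<phi> v) + lam * m v * (lam + fst v * Ps (\<phi> v))) / E v" for v
  define R' where "R' v = (mu * snd (snd v) + fst v * Qs (\<phi> v) - snd (snd v) * (lam + fst v * Ps (\<phi> v))) / E v" for v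
  have E: "hol_at E 0" "E 0 = 1"
    unfolding E_def using hol_comp[OF hol_at_spike_chart1_unit[OF hol(1)]] spike_chart1_unit_0[OF c] \<phi>0
    by simp_all
  have m: "m 0 = 0" using c by (simp add: m_def)
  have "in_m P'" "in_m Q'" "in_m R'"
    unfolding in_m_def P'_def Q'_def R'_def m_def using E m c hol_comp[OF hol(1)] hol_comp[OF hol(2)] hol_comp[OF hol(3)]
    by (auto intro!: hol_at_intros)
  have "\<forall>\<^sub>F v in nhds 0. E v \<noteq> 0" using hol_at_eventually_ne_0[OF E(1)] E(2) by simp
  then have "\<forall>\<^sub>F v in nhds 0. spike_chart1_lift c lam mu Ps Qs Rs (\<phi> v) = \<phi> (corner_form c c 0 lam (- lam) P' Q' R' v)"
  proof eventually_elim
    case (elim v)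
    obtain x y z where v: "v = (x, y, z)" by (cases v)
    show ?case using elim
      by (simp add: v \<phi>_def spike_chart1_lift_def corner_form_def P'_def Q'_def R'_def E_def m_def
          spike_chart1_unit_def Let_def power_mult_distrib field_simps)
  qed
  moreover have "loc_coords \<phi> 0"
    unfolding loc_coords_def using hol_\<phi> \<phi>0 by (intro conjI exI[of _ \<phi>]) (auto simp: \<phi>_def)
  ultimately have "germ_in_coords (spike_chart1_lift c lam mu Ps Qs Rs) 0 (corner_form c c 0 lam (- lam) P' Q' R')"
    unfolding germ_in_coords_def by blast
  then show ?thesis
    unfolding simple_corner_def using c lam neg_not_pos_rat_multiple[OF lam] \<open>in_m P'\<close> \<open>in_m Q'\<close> \<open>in_m R'\<close>
    by (intro exI[of _ c] exI[of _ 0] exI[of _ lam] exI[of _ "- lam"] exI[of _ P'] exI[of _ Q'] exI[of _ R']) simp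
qed

lemma spike_chart1:
  assumes c: "c \<ge> 1" and lam: "lam \<noteq> 0" and P: "in_m2 P" and Q: "in_m2 Q" and R: "in_m R"
    and f: "\<forall>\<^sub>F v in nhds 0. f v = spike_form c lam mu P Q R v"
  shows "(\<exists>G. is_lift chart1 f G) \<and> (\<forall>G. is_lift chart1 f G \<longrightarrow> simple_corner G 0)"
proof -
  have chart1: "isCont chart1 0" "chart1 0 = 0"
    by (simp_all add: hol3_at_isCont[OF hol3_at_chart1] chart1_apply zero_prod_def)
  obtain Ps Qs Rs where Ps: "hol_at Ps 0" "\<forall>\<^sub>F v in nhds 0. P (chart1 v) = fst v * fst v * Ps v"
    and Qs: "hol_at Qs 0" "\<forall>\<^sub>F v in nhds 0. Q (chart1 v) = fst v * fst v * Qs v"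
    and Rs: "hol_at Rs 0" "\<forall>\<^sub>F v in nhds 0. R (chart1 v) = fst v * Rs v"
    using germ_dvd_in_m2[OF germ_dvd_in_m_chart1 chart1 P] germ_dvd_in_m2[OF germ_dvd_in_m_chart1 chart1 Q]
      germ_dvd_in_m_chart1[OF R] unfolding germ_dvd_def by blast
  let ?G0 = "spike_chart1_lift c lam mu Ps Qs Rs"
  have unit: "\<forall>\<^sub>F v in nhds 0. spike_chart1_unit c lam Ps v \<noteq> 0"
    using hol_at_eventually_ne_0[OF hol_at_spike_chart1_unit[OF Ps(1)]] spike_chart1_unit_0[OF c] by simp
  have "\<forall>\<^sub>F v in nhds 0. f (chart1 v) = spike_form c lam mu P Q R (chart1 v)"
    using isCont_eventually_nhds[OF chart1(1)] f chart1(2) by simp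
  then have "\<forall>\<^sub>F v in nhds 0. chart1 (?G0 v) = f (chart1 v)"
    using Ps(2) Qs(2) Rs(2) unit
  proof eventually_elim
    case (elim v)
    then show ?case
      using chart1_spike_chart1_lift[of P v Ps Q Qs R Rs c lam mu, OF elim(2-5)] by simp
  qed
  then have lift: "is_lift chart1 f ?G0"
    unfolding is_lift_def using hol3_at_spike_chart1_lift[OF c Ps(1) Qs(1) Rs(1)] by blast
  have "\<forall>\<^sub>F v in nhds 0. G v = ?G0 v" if "is_lift chart1 f G" for G
  proof (rule is_lift_unique[OF that lift, where \<kappa> = fst and u = "(1, 0, 0)"])
    show "\<forall>\<^sub>F v in nhds 0. fst v \<noteq> 0 \<longrightarrow> fst (?G0 v) \<noteq> 0"
      using unit by eventually_elim (simp add: spike_chart1_lift_def Let_def)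
  qed (auto simp: chart1_apply prod_eq_iff smul3_def)
  then show ?thesis
    using lift simple_corner_cong simple_corner_spike_chart1_lift[OF c lam Ps(1) Qs(1) Rs(1)] by blast
qed

lemma spike_chart2:
  assumes c: "c \<ge> 1" and mu: "mu \<noteq> 0" and P: "in_m2 P" and Q: "in_m2 Q" and R: "in_m R"
    and f: "\<forall>\<^sub>F v in nhds 0. f v = spike_form c lam mu P Q R v"
  shows "(\<exists>G. is_lift chart2 f G) \<and> (\<forall>G. is_lift chart2 f G \<longrightarrow> simple_corner G 0)"
proof -
  note swap = hol3_at_swap12 swap12_0 swap12_swap12
  let ?f = "\<lambda>v. swap12 (f (swap12 v))"
  have "\<forall>\<^sub>F v in nhds (swap12 0). f v = spike_form c lam mu P Q R v" using f by simp
  from isCont_eventually_nhds[OF hol3_at_isCont[OF hol3_at_swap12] this]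
  have "\<forall>\<^sub>F v in nhds 0. ?f v = spike_form c mu lam (\<lambda>v. Q (swap12 v)) (\<lambda>v. P (swap12 v)) (\<lambda>v. R (swap12 v)) v"
    by (auto simp: spike_form_swap12 elim!: eventually_mono)
  then have chart1: "(\<exists>G. is_lift chart1 ?f G) \<and> (\<forall>G. is_lift chart1 ?f G \<longrightarrow> simple_corner G 0)"
    using c mu P Q R
    by (intro spike_chart1) (simp_all add: in_m2_compose in_m_compose swap)
  have chart2: "chart2 = (\<lambda>v. swap12 (chart1 (swap12 v)))" by (simp add: fun_eq_iff chart2_swap12)
  show ?thesis
  proof (intro conjI allI impI)
    obtain G where "is_lift chart1 ?f G" using chart1 by blast
    from is_lift_conj[OF swap this] show "\<exists>G. is_lift chart2 f G"
      unfolding chart2 by auto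
  next
    fix G assume "is_lift chart2 f G"
    from is_lift_conj[OF swap this[unfolded chart2]]
    have "simple_corner (\<lambda>v. swap12 (G (swap12 v))) 0" using chart1 by simp
    from simple_corner_conj[OF swap this] show "simple_corner G 0" by simp
  qed
qed

section \<open>The lift in the chart at \<open>[0:0:1]\<close>\<close>

definition spike_chart3_unit :: "nat \<Rightarrow> (c3 \<Rightarrow> complex) \<Rightarrow> c3 \<Rightarrow> complex" where
  "spike_chart3_unit c Rz v = 1 + snd (snd v) ^ c * snd (snd v) * Rz v"

text \<open>Likewise, if \<open>P, Q, R\<close> pull back to \<open>r\<^sup>2 Pz, r\<^sup>2 Qz, r Rz\<close>, the spike maps \<open>chart3 (s, t, r)\<close>
  to \<open>(r (s + r\<^sup>c (\<lambda> s + r Pz)), r (t + r\<^sup>c (\<mu> t + r Qz)), r D)\<close> with \<open>D = spike_chart3_unit\<close>.\<close>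
definition spike_chart3_lift :: "nat \<Rightarrow> complex \<Rightarrow> complex \<Rightarrow> (c3 \<Rightarrow> complex) \<Rightarrow> (c3 \<Rightarrow> complex)
    \<Rightarrow> (c3 \<Rightarrow> complex) \<Rightarrow> c3 \<Rightarrow> c3" where
  "spike_chart3_lift c lam mu Pz Qz Rz v =
     (let s = fst v; t = fst (snd v); r = snd (snd v); D = spike_chart3_unit c Rz v
      in ((s + r ^ c * (lam * s + r * Pz v)) / D, (t + r ^ c * (mu * t + r * Qz v)) / D, r * D))"

lemma hol_at_spike_chart3_unit: "hol_at Rz 0 \<Longrightarrow> hol_at (spike_chart3_unit c Rz) 0"
  unfolding spike_chart3_unit_def[abs_def] by (intro hol_at_intros)

lemma spike_chart3_unit_0: "spike_chart3_unit c Rz 0 = 1"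
  by (simp add: spike_chart3_unit_def)

lemma hol3_at_spike_chart3_lift:
  assumes "hol_at Pz 0" "hol_at Qz 0" "hol_at Rz 0"
  shows "hol3_at (spike_chart3_lift c lam mu Pz Qz Rz) 0"
  using assms hol_at_spike_chart3_unit[OF assms(3)] spike_chart3_unit_0
  unfolding hol3_at_def spike_chart3_lift_def Let_def by (auto intro!: hol_at_intros)

lemma chart3_spike_chart3_lift:
  assumes "P (chart3 v) = snd (snd v) * snd (snd v) * Pz v" "Q (chart3 v) = snd (snd v) * snd (snd v) * Qz v"
    "R (chart3 v) = snd (snd v) * Rz v" "spike_chart3_unit c Rz v \<noteq> 0"
  shows "chart3 (spike_chart3_lift c lam mu Pz Qz Rz v) = spike_form c lam mu P Q R (chart3 v)"
  using assms by (cases v) (simp add: chart3_apply spike_chart3_lift_def spike_chart3_unit_def Let_def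
      spike_form_def field_simps)

lemma loc_coords_shear:
  "loc_coords (\<lambda>v. (fst v - \<alpha> * snd (snd v), fst (snd v) - \<beta> * snd (snd v), snd (snd v))) 0"
  unfolding loc_coords_def
  by (intro conjI exI[of _ "\<lambda>v. (fst v + \<alpha> * snd (snd v), fst (snd v) + \<beta> * snd (snd v), snd (snd v))"])
     (auto simp: hol3_at_def hol_at_intros zero_prod_def)

text \<open>A component of the chart-3 lift conjugated by the shear \<open>(u, w, r) \<mapsto> (u - \<alpha> r, w - \<beta> r, r)\<close>,
  with \<open>X = r ^ c\<close>, \<open>\<rho> = Rz\<close> and \<open>D\<close> the unit \<open>1 + X r \<rho>\<close>.\<close>
lemma spike_shear_identity:
  fixes u r X p p0 \<rho> lam D \<alpha> :: complex
  assumes D: "D \<noteq> 0" "D = 1 + X * r * \<rho>" and p0: "p0 = lam * \<alpha>"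
  shows "(u - \<alpha> * r + X * (lam * (u - \<alpha> * r) + r * p)) / D
     = u + X * (lam * u + (u * (lam * (1 - D) / D) + r * ((p - p0) / D) + (u - \<alpha> * r) * (- (r * \<rho>) / D)
         + r * (\<alpha> * r * \<rho>))) - \<alpha> * (r + X * r * (r * \<rho>))"
proof -
  have "u - \<alpha> * r + X * (lam * (u - \<alpha> * r) + r * p) =
     (u + X * (lam * u + (u * (lam * (1 - D) / D) + r * ((p - p0) / D) + (u - \<alpha> * r) * (- (r * \<rho>) / D)
       + r * (\<alpha> * r * \<rho>))) - \<alpha> * (r + X * r * (r * \<rho>))) * D"
    using D(1) by (simp add: algebra_simps diff_divide_distrib add_divide_distrib) (simp add: D(2) p0 algebra_simps)
  then show ?thesis using D(1) by (simp add: divide_eq_eq)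
qed

lemma degenerate_spike_spike_chart3_lift:
  assumes c: "c \<ge> 1" and lam: "lam \<noteq> 0" and mu: "\<exists>t::real. t < 0 \<and> mu = complex_of_real t * lam"
    and hol: "hol_at Pz 0" "hol_at Qz 0" "hol_at Rz 0"
  shows "degenerate_spike (spike_chart3_lift c lam mu Pz Qz Rz) 0"
proof -
  have "mu \<noteq> 0" using mu lam by auto
  define \<alpha> where "\<alpha> = Pz 0 / lam"
  define \<beta> where "\<beta> = Qz 0 / mu"
  define \<phi> where "\<phi> v = (fst v - \<alpha> * snd (snd v), fst (snd v) - \<beta> * snd (snd v), snd (snd v))" for v
  have hol_\<phi>: "hol3_at \<phi> 0" unfolding hol3_at_def \<phi>_def by (simp add: hol_at_intros)
  have \<phi>0: "\<phi> 0 = 0" by (simp add: \<phi>_def zero_prod_def)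
  have hol_comp: "hol_at (\<lambda>v. h (\<phi> v)) 0" if "hol_at h 0" for h
    using that \<phi>0 by (simp add: hol_at_compose[OF hol_\<phi>])
  define D where "D v = spike_chart3_unit c Rz (\<phi> v)" for v
  have D: "hol_at D 0" "D 0 = 1"
    unfolding D_def using hol_comp[OF hol_at_spike_chart3_unit[OF hol(3)]] spike_chart3_unit_0 \<phi>0
    by simp_all
  define P' where "P' v = fst v * (lam * (1 - D v) / D v) + snd (snd v) * ((Pz (\<phi> v) - Pz 0) / D v)
     + (fst v - \<alpha> * snd (snd v)) * (- (snd (snd v) * Rz (\<phi> v)) / D v)
     + snd (snd v) * (\<alpha> * snd (snd v) * Rz (\<phi> v))" for v
  define Q' where "Q' v = fst (snd v) * (mu * (1 - D v) / D v) + snd (snd v) * ((Qz (\<phi> v) - Qz 0) / D v)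
     + (fst (snd v) - \<beta> * snd (snd v)) * (- (snd (snd v) * Rz (\<phi> v)) / D v)
     + snd (snd v) * (\<beta> * snd (snd v) * Rz (\<phi> v))" for v
  define R' where "R' v = snd (snd v) * Rz (\<phi> v)" for v
  note hol' = hol_comp[OF hol(1)] hol_comp[OF hol(2)] hol_comp[OF hol(3)]
  have "in_m2 P'" "in_m2 Q'"
    unfolding P'_def Q'_def using D \<phi>0 hol'
    by (intro in_m2_add in_m2_mult; auto simp: in_m_def intro!: hol_at_intros)+
  moreover have "in_m R'" unfolding R'_def in_m_def using hol' by (auto intro!: hol_at_intros)
  ultimately have params: "spike_params c lam mu P' Q' R'"
    unfolding spike_params_def using c lam mu by blast
  have "\<forall>\<^sub>F v in nhds 0. D v \<noteq> 0" using hol_at_eventually_ne_0[OF D(1)] D(2) by simp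
  then have "\<forall>\<^sub>F v in nhds 0. spike_chart3_lift c lam mu Pz Qz Rz (\<phi> v) = \<phi> (spike_form c lam mu P' Q' R' v)"
  proof eventually_elim
    case (elim v)
    obtain u w r where v: "v = (u, w, r)" by (cases v)
    have D_v: "D v = 1 + r ^ c * r * Rz (\<phi> v)" by (simp add: D_def spike_chart3_unit_def v \<phi>_def)
    have D_\<phi>: "spike_chart3_unit c Rz (u - \<alpha> * r, w - \<beta> * r, r) = D (u, w, r)" by (simp add: D_def \<phi>_def)
    have "Pz 0 = lam * \<alpha>" "Qz 0 = mu * \<beta>" using lam \<open>mu \<noteq> 0\<close> by (simp_all add: \<alpha>_def \<beta>_def)
    from spike_shear_identity[OF elim D_v this(1), of u "Pz (\<phi> v)"]
      spike_shear_identity[OF elim D_v this(2), of w "Qz (\<phi> v)"] D_v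
    show ?case
      by (simp add: v \<phi>_def spike_chart3_lift_def spike_form_def P'_def Q'_def R'_def D_\<phi> Let_def
          power_Suc2 mult.assoc algebra_simps)
  qed
  moreover have "loc_coords \<phi> 0" unfolding \<phi>_def[abs_def] by (rule loc_coords_shear)
  ultimately show ?thesis
    unfolding degenerate_spike_def germ_in_coords_def using params by blast
qed

lemma spike_chart3:
  assumes c: "c \<ge> 1" and lam: "lam \<noteq> 0" and mu: "\<exists>t::real. t < 0 \<and> mu = complex_of_real t * lam"
    and P: "in_m2 P" and Q: "in_m2 Q" and R: "in_m R"
    and f: "\<forall>\<^sub>F v in nhds 0. f v = spike_form c lam mu P Q R v"
  shows "(\<exists>G. is_lift chart3 f G) \<and> (\<forall>G. is_lift chart3 f G \<longrightarrow> degenerate_spike G 0)"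
proof -
  have chart3: "isCont chart3 0" "chart3 0 = 0"
    by (simp_all add: hol3_at_isCont[OF hol3_at_chart3] chart3_apply zero_prod_def)
  obtain Pz Qz Rz where Pz: "hol_at Pz 0" "\<forall>\<^sub>F v in nhds 0. P (chart3 v) = snd (snd v) * snd (snd v) * Pz v"
    and Qz: "hol_at Qz 0" "\<forall>\<^sub>F v in nhds 0. Q (chart3 v) = snd (snd v) * snd (snd v) * Qz v"
    and Rz: "hol_at Rz 0" "\<forall>\<^sub>F v in nhds 0. R (chart3 v) = snd (snd v) * Rz v"
    using germ_dvd_in_m2[OF germ_dvd_in_m_chart3 chart3 P] germ_dvd_in_m2[OF germ_dvd_in_m_chart3 chart3 Q]
      germ_dvd_in_m_chart3[OF R] unfolding germ_dvd_def by blast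
  let ?G0 = "spike_chart3_lift c lam mu Pz Qz Rz"
  have unit: "\<forall>\<^sub>F v in nhds 0. spike_chart3_unit c Rz v \<noteq> 0"
    using hol_at_eventually_ne_0[OF hol_at_spike_chart3_unit[OF Rz(1)]] spike_chart3_unit_0 by simp
  have "\<forall>\<^sub>F v in nhds 0. f (chart3 v) = spike_form c lam mu P Q R (chart3 v)"
    using isCont_eventually_nhds[OF chart3(1)] f chart3(2) by simp
  then have "\<forall>\<^sub>F v in nhds 0. chart3 (?G0 v) = f (chart3 v)"
    using Pz(2) Qz(2) Rz(2) unit
  proof eventually_elim
    case (elim v)
    then show ?case
      using chart3_spike_chart3_lift[of P v Pz Q Qz R Rz c lam mu, OF elim(2-5)] by simp
  qed
  then have lift: "is_lift chart3 f ?G0"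
    unfolding is_lift_def using hol3_at_spike_chart3_lift[OF Pz(1) Qz(1) Rz(1)] by blast
  have "\<forall>\<^sub>F v in nhds 0. G v = ?G0 v" if "is_lift chart3 f G" for G
  proof (rule is_lift_unique[OF that lift, where \<kappa> = "\<lambda>v. snd (snd v)" and u = "(0, 0, 1)"])
    show "\<forall>\<^sub>F v in nhds 0. snd (snd v) \<noteq> 0 \<longrightarrow> snd (snd (?G0 v)) \<noteq> 0"
      using unit by eventually_elim (simp add: spike_chart3_lift_def Let_def)
  qed (auto simp: chart3_apply prod_eq_iff smul3_def)
  then show ?thesis
    using lift degenerate_spike_cong degenerate_spike_spike_chart3_lift[OF c lam mu Pz(1) Qz(1) Rz(1)] by blast
qed

theorem proposition3p19:
  fixes f :: "c3 \<Rightarrow> c3" and c :: nat and lam mu :: complex and P Q R :: "c3 \<Rightarrow> complex"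
  assumes "c \<ge> 1" and "lam \<noteq> 0" and "\<exists>t::real. t < 0 \<and> mu = complex_of_real t * lam"
    and "in_m2 P" and "in_m2 Q" and "in_m R"
    and "\<forall>\<^sub>F v in nhds 0. f v = spike_form c lam mu P Q R v"
  shows "(\<exists>G. is_lift chart3 f G) \<and> (\<forall>G. is_lift chart3 f G \<longrightarrow> degenerate_spike G 0)
     \<and> (\<exists>G. is_lift chart1 f G) \<and> (\<forall>G. is_lift chart1 f G \<longrightarrow> simple_corner G 0)
     \<and> (\<exists>G. is_lift chart2 f G) \<and> (\<forall>G. is_lift chart2 f G \<longrightarrow> simple_corner G 0)"
proof -
  have "mu \<noteq> 0" using assms(2,3) by auto
  then show ?thesis
    using spike_chart3[OF assms] spike_chart1[OF assms(1,2,4-7)] spike_chart2[OF assms(1) _ assms(4-7)]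
    by blast
qed

end
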